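(* Let $\Omega_\delta$ be a discrete domain, $a$ a face of $\Omega_\delta$, and $[\Omega_\delta,a]$ the double cover of $\Omega_\delta$ ramified at $a$. Let $b_1,\dots,b_{2n}$ be distinct medial vertices (edge midpoints) of $\Omega_\delta$, each with a fixed chosen lift $\hat b_j$ in $[\Omega_\delta,a]$, and let $\gamma\in C(b_1,\dots,b_{2n})$ be a configuration. Then for any two admissible choices of walks $\langle\gamma_1,\dots,\gamma_n\rangle$ and $\langle\tilde\gamma_1,\dots,\tilde\gamma_n\rangle$ from $\gamma$, $$(-1)^{\#L(\gamma\setminus\bigcup_i\gamma_i,\,a)}\prod_{i=1}^n\operatorname{Sheet}(\gamma_i)=(-1)^{\#L(\gamma\setminus\bigcup_i\tilde\gamma_i,\,a)}\prod_{i=1}^n\operatorname{Sheet}(\tilde\gamma_i).$$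
   Context: $\Omega_\delta$ is a finite piece of the rotated square lattice $(1+i)\mathbb{Z}^2\delta$ (vertices, edges of length $\sqrt2\delta$, square faces); $a$ is identified with the center of one of its faces. Configuration: $C(b_1,\dots,b_{2n})$ is the set of collections $\gamma$ of edges and half-edges of $\Omega_\delta$ (a half-edge joins an edge midpoint to one endpoint of that edge) such that at each $b_j$ exactly one half-edge of the edge through $b_j$ is present and every vertex of $\Omega_\delta$ has even degree in $\gamma$. An admissible choice of walks from $\gamma$ is a decomposition of $\gamma$ into $n$ edge-disjoint walks $\gamma_1,\dots,\gamma_n$, each $\gamma_i$ a walk in $\gamma$ joining two of the points $b_j$, each $b_j$ being an endpoint of exactly one walk, together with the remainder $\gamma\setminus\bigcup_i\gamma_i$, which has even degree at every vertex (a union of loops). Loop number: for an edge set $A$ with even degree at every vertex, $\#L(A,a)$ is the number of loops surrounding the face $a$ when $A$ is decomposed into edge-disjoint closed loops without crossings (only its parity matters). Sheet number: for a walk $w$ from $b_j$ to $b_k$, $\operatorname{Sheet}(w)=1$ if the lift of $w$ to $[\Omega_\delta,a]$ starting at $\hat b_j$ ends at $\hat b_k$, and $-1$ otherwise. *)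

theory Defs
  imports "HOL-Complex_Analysis.Complex_Analysis"
begin

definition lat_vertex :: "real \<Rightarrow> complex \<Rightarrow> bool" where
  "lat_vertex \<delta> z \<longleftrightarrow>
     (\<exists>m k :: int. z = of_real \<delta> * (1 + \<i>) * (of_int m + \<i> * of_int k))"

text \<open>A face is identified with its center; the face with bottom corner v has center v + i delta
  and corners center +- delta, center +- i delta.\<close>
definition face_center :: "real \<Rightarrow> complex \<Rightarrow> bool" where
  "face_center \<delta> c \<longleftrightarrow> lat_vertex \<delta> (c - \<i> * of_real \<delta>)"

definition face_edges :: "real \<Rightarrow> complex \<Rightarrow> complex set set" where
  "face_edges \<delta> c =
     {{c - \<i> * of_real \<delta>, c + of_real \<delta>}, {c + of_real \<delta>, c + \<i> * of_real \<delta>},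
      {c + \<i> * of_real \<delta>, c - of_real \<delta>}, {c - of_real \<delta>, c - \<i> * of_real \<delta>}}"

text \<open>The discrete domain is given by its (finite) set F of faces (face centers).\<close>
definition dom_edges :: "real \<Rightarrow> complex set \<Rightarrow> complex set set" where
  "dom_edges \<delta> F = \<Union> (face_edges \<delta> ` F)"

definition dom_vertices :: "real \<Rightarrow> complex set \<Rightarrow> complex set" where
  "dom_vertices \<delta> F = \<Union> (dom_edges \<delta> F)"

definition medial :: "real \<Rightarrow> complex set \<Rightarrow> complex set" where
  "medial \<delta> F = {(u + v) / 2 | u v. {u, v} \<in> dom_edges \<delta> F}"

text \<open>Half-edges: unordered pairs {midpoint of an edge, one endpoint of that edge}.
  An edge of the domain is represented by its two half-edges.\<close>
definition half_edges :: "real \<Rightarrow> complex set \<Rightarrow> complex set set" where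
  "half_edges \<delta> F = {{(u + v) / 2, u} | u v. {u, v} \<in> dom_edges \<delta> F}"

definition deg :: "complex set set \<Rightarrow> complex \<Rightarrow> nat" where
  "deg A v = card {h \<in> A. v \<in> h}"

definition config ::
  "real \<Rightarrow> complex set \<Rightarrow> (nat \<Rightarrow> complex) \<Rightarrow> nat \<Rightarrow> complex set set \<Rightarrow> bool" where
  "config \<delta> F b n \<gamma> \<longleftrightarrow>
     \<gamma> \<subseteq> half_edges \<delta> F \<and>
     (\<forall>j<2*n. \<forall>u v. {u, v} \<in> dom_edges \<delta> F \<and> b j = (u + v) / 2 \<longrightarrow>
         ({(u + v) / 2, u} \<in> \<gamma> \<longleftrightarrow> {(u + v) / 2, v} \<notin> \<gamma>)) \<and>
     (\<forall>v \<in> dom_vertices \<delta> F. even (deg \<gamma> v))"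

definition steps :: "complex list \<Rightarrow> complex set list" where
  "steps w = map (\<lambda>k. {w ! k, w ! Suc k}) [0..<length w - 1]"

definition trail_in :: "complex set set \<Rightarrow> complex list \<Rightarrow> bool" where
  "trail_in A w \<longleftrightarrow> 2 \<le> length w \<and> distinct (steps w) \<and> set (steps w) \<subseteq> A"

definition remainder :: "complex set set \<Rightarrow> complex list list \<Rightarrow> complex set set" where
  "remainder \<gamma> ws = \<gamma> - (\<Union>w \<in> set ws. set (steps w))"

definition admissible ::
  "real \<Rightarrow> complex set \<Rightarrow> (nat \<Rightarrow> complex) \<Rightarrow> nat \<Rightarrow> complex set set \<Rightarrow> complex list list \<Rightarrow> bool" where
  "admissible \<delta> F b n \<gamma> ws \<longleftrightarrow>
     length ws = n \<and>
     (\<forall>i<n. trail_in \<gamma> (ws ! i) \<and> hd (ws ! i) \<in> b ` {..<2*n} \<and> last (ws ! i) \<in> b ` {..<2*n}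
            \<and> hd (ws ! i) \<noteq> last (ws ! i)) \<and>
     (\<forall>i<n. \<forall>i'<n. i \<noteq> i' \<longrightarrow> set (steps (ws ! i)) \<inter> set (steps (ws ! i')) = {}) \<and>
     (\<forall>j<2*n. \<exists>!i. i < n \<and> (b j = hd (ws ! i) \<or> b j = last (ws ! i))) \<and>
     (\<forall>v \<in> dom_vertices \<delta> F. even (deg (remainder \<gamma> ws) v))"

fun polypath :: "complex list \<Rightarrow> real \<Rightarrow> complex" where
  "polypath [] = linepath 0 0"
| "polypath [p] = linepath p p"
| "polypath (p # q # rest) = linepath p q +++ polypath (q # rest)"

text \<open>Closed loop in A without crossings: at a vertex of degree 4 in A, a passage never goes
  straight through (the only crossing pairing on the square lattice is the straight one).\<close>
definition noncrossing_loop :: "complex set set \<Rightarrow> complex list \<Rightarrow> bool" where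
  "noncrossing_loop A l \<longleftrightarrow>
     trail_in A l \<and> hd l = last l \<and>
     (\<forall>k < length l - 1.
        let r = length l - 1;
            prev = l ! (if k = 0 then r - 1 else k - 1);
            cur = l ! k;
            nxt = l ! Suc k
        in deg A cur = 4 \<longrightarrow> prev + nxt \<noteq> 2 * cur)"

definition loop_decomp :: "complex set set \<Rightarrow> complex list list \<Rightarrow> bool" where
  "loop_decomp A Ls \<longleftrightarrow>
     (\<forall>l \<in> set Ls. noncrossing_loop A l) \<and>
     (\<forall>i<length Ls. \<forall>i'<length Ls. i \<noteq> i' \<longrightarrow> set (steps (Ls ! i)) \<inter> set (steps (Ls ! i')) = {}) \<and>
     (\<Union>l \<in> set Ls. set (steps l)) = A"

definition loops_around :: "complex \<Rightarrow> complex list list \<Rightarrow> nat" where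
  "loops_around a Ls = length (filter (\<lambda>l. winding_number (polypath l) a \<noteq> 0) Ls)"

text \<open>The double cover ramified at a is realised as {(z,w). w^2 = z - a}; a lift of a point z is
  given by a square root of z - a. hat assigns to each b_j the chosen lift.\<close>
definition sheet :: "complex \<Rightarrow> (complex \<Rightarrow> complex) \<Rightarrow> complex list \<Rightarrow> int" where
  "sheet a hat w =
     (if \<exists>g. continuous_on {0..1} g \<and> (\<forall>t\<in>{0..1}. (g t)^2 = polypath w t - a) \<and>
             g 0 = hat (hd w) \<and> g 1 = hat (last w)
      then 1 else -1)"

end

theory Submission
  imports Defs
begin

text \<open>
  For a half-edge \<open>{x, y}\<close> avoiding \<open>a\<close> let \<open>\<sigma>{x, y} = \<surd>(x - a) exp(\<pi> i W) / \<surd>(y - a)\<close>,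
  where \<open>\<surd>\<close> is the principal square root and \<open>W\<close> the winding number of the segment \<open>[x, y]\<close>
  around \<open>a\<close>; it is \<open>\<plusminus>1\<close> and symmetric in \<open>x\<close> and \<open>y\<close>. A continuous square root of \<open>z - a\<close>
  gains the factor \<open>exp(\<pi> i W)\<close> along a path of winding number \<open>W\<close>, so telescoping over the steps
  gives \<open>Sheet(w) = \<epsilon>(start) \<epsilon>(end) \<Prod>\<^bsub>h \<in> w\<^esub> \<sigma>(h)\<close> with \<open>\<epsilon>(z) = hat z / \<surd>(z - a) = \<plusminus>1\<close>, and
  \<open>\<Prod>\<^bsub>h \<in> l\<^esub> \<sigma>(h) = exp(\<pi> i W)\<close> for a closed loop \<open>l\<close>. Cutting the corners of a noncrossing
  lattice loop at the midpoints of its half-edges does not change its winding number around the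
  face \<open>a\<close> and yields a simple closed polygon, so \<open>W \<in> {-1, 0, 1}\<close> and the product is \<open>-1\<close>
  exactly when \<open>l\<close> surrounds \<open>a\<close>. Hence both sides of the identity equal
  \<open>\<Prod>\<^sub>j \<epsilon>(b\<^sub>j) \<Prod>\<^bsub>h \<in> \<gamma>\<^esub> \<sigma>(h)\<close>, whatever the choice of walks.
\<close>

definition seg_winding :: "complex \<Rightarrow> complex \<Rightarrow> complex \<Rightarrow> complex" where
  "seg_winding a x y = winding_number (linepath x y) a"

lemma seg_winding_swap: "a \<notin> closed_segment x y \<Longrightarrow> seg_winding a y x = - seg_winding a x y"
  unfolding seg_winding_def
  by (metis path_linepath path_image_linepath reversepath_linepath winding_number_reversepath)

lemma exp_seg_winding:
  assumes "a \<notin> closed_segment x y"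
  shows "exp (2 * pi * \<i> * seg_winding a x y) = (y - a) / (x - a)"
proof -
  obtain q where q: "pathfinish q - pathstart q = 2 * of_real pi * \<i> * seg_winding a x y"
      "\<And>t. t \<in> {0..1} \<Longrightarrow> linepath x y t = a + exp (q t)"
    using winding_number_as_continuous_log[of "linepath x y" a] assms
    unfolding seg_winding_def by auto
  have "x - a = exp (q 0)" "y - a = exp (q 1)"
    using q(2)[of 0] q(2)[of 1] by (auto simp: linepath_def)
  moreover have "q 1 = q 0 + 2 * of_real pi * \<i> * seg_winding a x y"
    using q(1) by (simp add: pathstart_def pathfinish_def algebra_simps)
  ultimately show ?thesis by (simp add: exp_add)
qed

lemma seg_winding_triangle:
  assumes "convex S" "x \<in> S" "y \<in> S" "z \<in> S" "a \<notin> S"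
  shows "seg_winding a x y + seg_winding a y z = seg_winding a x z"
proof -
  have sub: "closed_segment x y \<subseteq> S" "closed_segment y z \<subseteq> S" "closed_segment z x \<subseteq> S"
    "closed_segment x z \<subseteq> S"
    using assms(2-4) by (simp_all add: closed_segment_subset[OF _ _ assms(1)])
  then have avoid: "a \<notin> closed_segment x y" "a \<notin> closed_segment y z" "a \<notin> closed_segment z x"
    "a \<notin> closed_segment x z"
    using assms(5) by auto
  let ?g = "linepath x y +++ (linepath y z +++ linepath z x)"
  have "winding_number ?g a = 0"
    by (rule winding_number_zero_outside[OF _ assms(1) _ assms(5)])
      (use sub in \<open>auto simp: path_image_join\<close>)
  moreover have "winding_number ?g a = seg_winding a x y + (seg_winding a y z + seg_winding a z x)"
    using avoid by (simp add: winding_number_join path_image_join seg_winding_def)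
  ultimately show ?thesis
    using seg_winding_swap[OF avoid(4)] by (simp add: algebra_simps)
qed

lemma polypath_start: "w \<noteq> [] \<Longrightarrow> pathstart (polypath w) = hd w"
  by (induction w rule: polypath.induct) (auto simp: pathstart_join)

lemma polypath_finish: "w \<noteq> [] \<Longrightarrow> pathfinish (polypath w) = last w"
  by (induction w rule: polypath.induct) (auto simp: pathfinish_join)

lemma path_polypath: "path (polypath w)"
  by (induction w rule: polypath.induct) (auto simp: polypath_start path_const)

lemma path_image_polypath:
  "w \<noteq> [] \<Longrightarrow>
   path_image (polypath w) = insert (last w) (\<Union>k<length w - 1. closed_segment (w!k) (w!Suc k))"
proof (induction w rule: polypath.induct)
  case (3 p q rest)
  have "path_image (polypath (p # q # rest))
      = closed_segment p q \<union> path_image (polypath (q # rest))"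
    by (simp add: path_image_join polypath_start)
  also have "\<dots> = insert (last (p # q # rest))
      (\<Union>k<length (p#q#rest) - 1. closed_segment ((p#q#rest)!k) ((p#q#rest)!Suc k))"
    using "3.IH" by (auto simp: less_Suc_eq_0_disj)
  finally show ?case .
qed simp_all

lemma winding_number_polypath:
  "w \<noteq> [] \<Longrightarrow> a \<notin> path_image (polypath w) \<Longrightarrow>
   winding_number (polypath w) a = (\<Sum>k<length w - 1. seg_winding a (w!k) (w!Suc k))"
proof (induction w rule: polypath.induct)
  case (2 p) then show ?case by (simp add: winding_number_zero_const)
next
  case (3 p q rest)
  have ap: "a \<notin> closed_segment p q" and ar: "a \<notin> path_image (polypath (q#rest))"
    using "3.prems" by (auto simp: path_image_join polypath_start)
  have "winding_number (polypath (p # q # rest)) a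
      = seg_winding a p q + winding_number (polypath (q#rest)) a"
    using ap ar by (simp add: winding_number_join path_polypath polypath_start seg_winding_def)
  then show ?case
    using "3.IH" ar by (simp add: sum.lessThan_Suc_shift del: sum.lessThan_Suc)
qed simp

fun polygon_path :: "(nat \<Rightarrow> complex) \<Rightarrow> nat \<Rightarrow> real \<Rightarrow> complex" where
  "polygon_path R 0 = linepath (R 0) (R 0)"
| "polygon_path R (Suc 0) = linepath (R 0) (R 1)"
| "polygon_path R (Suc (Suc n)) = linepath (R 0) (R 1) +++ polygon_path (\<lambda>k. R (Suc k)) (Suc n)"

lemma polygon_path_start: "pathstart (polygon_path R n) = R 0"
  by (induction R n rule: polygon_path.induct)
    (simp_all add: pathstart_def joinpaths_def linepath_def)

lemma polygon_path_finish: "pathfinish (polygon_path R n) = R n"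
  by (induction R n rule: polygon_path.induct)
    (simp_all add: pathfinish_def joinpaths_def linepath_def)

lemma path_polygon_path: "path (polygon_path R n)"
  by (induction R n rule: polygon_path.induct) (auto simp: polygon_path_start path_const)

lemma path_image_polygon_path:
  "1 \<le> n \<Longrightarrow> path_image (polygon_path R n) = (\<Union>k<n. closed_segment (R k) (R (Suc k)))"
proof (induction R n rule: polygon_path.induct)
  case (3 R n)
  have "path_image (polygon_path R (Suc (Suc n)))
      = closed_segment (R 0) (R 1) \<union> (\<Union>k<Suc n. closed_segment (R (Suc k)) (R (Suc (Suc k))))"
    using "3.IH" by (simp add: path_image_join polygon_path_start)
  also have "\<dots> = (\<Union>k<Suc (Suc n). closed_segment (R k) (R (Suc k)))"
    by (auto simp: less_Suc_eq_0_disj)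
  finally show ?case .
qed auto

lemma winding_number_polygon_path:
  "1 \<le> n \<Longrightarrow> a \<notin> path_image (polygon_path R n) \<Longrightarrow>
   winding_number (polygon_path R n) a = (\<Sum>k<n. seg_winding a (R k) (R (Suc k)))"
proof (induction R n rule: polygon_path.induct)
  case (2 R) then show ?case by (simp add: seg_winding_def)
next
  case (3 R n)
  have a1: "a \<notin> closed_segment (R 0) (R 1)"
    and a2: "a \<notin> path_image (polygon_path (\<lambda>k. R (Suc k)) (Suc n))"
    using "3.prems" by (auto simp: path_image_join polygon_path_start)
  have "winding_number (polygon_path R (Suc (Suc n))) a
      = seg_winding a (R 0) (R 1) + winding_number (polygon_path (\<lambda>k. R (Suc k)) (Suc n)) a"
    using a1 a2
    by (simp add: winding_number_join path_polygon_path polygon_path_start seg_winding_def)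
  then show ?case
    using "3.IH" a2 by (simp only: sum.lessThan_Suc_shift[of _ "Suc n"]) simp
qed simp

lemma arc_polygon_path:
  "1 \<le> n \<Longrightarrow> (\<forall>k<n. R k \<noteq> R (Suc k)) \<Longrightarrow>
   (\<forall>i j. i < j \<longrightarrow> j < n \<longrightarrow>
      closed_segment (R i) (R (Suc i)) \<inter> closed_segment (R j) (R (Suc j))
        \<subseteq> (if j = Suc i then {R j} else {})) \<Longrightarrow>
   arc (polygon_path R n)"
proof (induction R n rule: polygon_path.induct)
  case (2 R) then show ?case by (simp add: arc_linepath)
next
  case (3 R n)
  let ?R' = "\<lambda>k. R (Suc k)"
  have arc1: "arc (linepath (R 0) (R 1))" using "3.prems"(2) by (auto simp: arc_linepath)
  have arc2: "arc (polygon_path ?R' (Suc n))"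
  proof (rule "3.IH")
    show "\<forall>k<Suc n. ?R' k \<noteq> ?R' (Suc k)" using "3.prems"(2) by auto
    show "\<forall>i j. i < j \<longrightarrow> j < Suc n \<longrightarrow>
        closed_segment (?R' i) (?R' (Suc i)) \<inter> closed_segment (?R' j) (?R' (Suc j))
          \<subseteq> (if j = Suc i then {?R' j} else {})"
    proof (intro allI impI)
      fix i j assume "i < j" "j < Suc n"
      then show "closed_segment (?R' i) (?R' (Suc i)) \<inter> closed_segment (?R' j) (?R' (Suc j))
          \<subseteq> (if j = Suc i then {?R' j} else {})"
        using "3.prems"(3)[rule_format, of "Suc i" "Suc j"] by simp
    qed
  qed simp
  have "closed_segment (R 0) (R 1) \<inter> closed_segment (R (Suc k)) (R (Suc (Suc k))) \<subseteq> {R 1}"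
    if "k < Suc n" for k
    using "3.prems"(3)[rule_format, of 0 "Suc k"] that by (auto split: if_splits)
  then have meet: "path_image (linepath (R 0) (R 1)) \<inter> path_image (polygon_path ?R' (Suc n))
      \<subseteq> {pathstart (polygon_path ?R' (Suc n))}"
    by (auto simp: path_image_polygon_path polygon_path_start)
  show ?case
    by (simp only: polygon_path.simps)
      (rule arc_join[OF arc1 arc2 _ meet], simp add: polygon_path_start)
qed simp

lemma simple_path_polygon_path:
  assumes r: "2 \<le> r" and closed: "R r = R 0"
    and inj: "\<And>i j. i < r \<Longrightarrow> j < r \<Longrightarrow> R i = R j \<Longrightarrow> i = j"
    and seg: "\<And>i j. i < r \<Longrightarrow> j < r \<Longrightarrow> i \<noteq> j \<Longrightarrow>
       closed_segment (R i) (R (Suc i)) \<inter> closed_segment (R j) (R (Suc j))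
         \<subseteq> {R i, R (Suc i)} \<inter> {R j, R (Suc j)}"
  shows "simple_path (polygon_path R r)"
proof -
  have inj_pos: "x = y" if "0 < x" "x \<le> r" "0 < y" "y \<le> r" "R x = R y" for x y
  proof -
    have "R (if x = r then 0 else x) = R (if y = r then 0 else y)"
      using that closed by (cases "x = r"; cases "y = r") auto
    then have "(if x = r then 0 else x) = (if y = r then 0 else y)"
      by (rule inj[rotated 2]) (use that r in auto)
    then show ?thesis using that by (auto split: if_splits)
  qed
  obtain n where n: "r = Suc (Suc n)" using r by (metis add_2_eq_Suc le_Suc_ex)
  let ?R' = "\<lambda>k. R (Suc k)"
  have ne: "R k \<noteq> R (Suc k)" if "k < r" for k
    using inj[of k "Suc k"] inj[of 0 k] closed that r by (cases "Suc k = r") auto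
  have arc1: "arc (linepath (R 0) (R 1))" using ne[of 0] r by (auto simp: arc_linepath)
  have arc2: "arc (polygon_path ?R' (Suc n))"
  proof (rule arc_polygon_path)
    show "\<forall>k<Suc n. ?R' k \<noteq> ?R' (Suc k)" using ne n by auto
    show "\<forall>i j. i < j \<longrightarrow> j < Suc n \<longrightarrow>
        closed_segment (?R' i) (?R' (Suc i)) \<inter> closed_segment (?R' j) (?R' (Suc j))
          \<subseteq> (if j = Suc i then {?R' j} else {})"
    proof (intro allI impI subsetI)
      fix i j p assume ij: "i < j" "j < Suc n"
        and p: "p \<in> closed_segment (?R' i) (?R' (Suc i)) \<inter> closed_segment (?R' j) (?R' (Suc j))"
      then have "p \<in> {R (Suc i), R (Suc (Suc i))} \<inter> {R (Suc j), R (Suc (Suc j))}"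
        using seg[of "Suc i" "Suc j"] n by auto
      then obtain x y where "x \<in> {Suc i, Suc (Suc i)}" "y \<in> {Suc j, Suc (Suc j)}" "p = R x"
        "p = R y"
        by blast
      moreover from this have "x = y" using inj_pos[of x y] ij n by auto
      ultimately show "p \<in> (if j = Suc i then {?R' j} else {})" using ij by auto
    qed
  qed simp
  have "closed_segment (R 0) (R 1) \<inter> closed_segment (R (Suc k)) (R (Suc (Suc k))) \<subseteq> {R 0, R 1}"
    if "k < Suc n" for k
    using seg[of 0 "Suc k"] that n by auto
  then have "path_image (linepath (R 0) (R 1)) \<inter> path_image (polygon_path ?R' (Suc n))
      \<subseteq> {pathstart (linepath (R 0) (R 1)), pathstart (polygon_path ?R' (Suc n))}"
    by (auto simp: path_image_polygon_path polygon_path_start)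
  then have "simple_path (linepath (R 0) (R 1) +++ polygon_path ?R' (Suc n))"
    by (rule simple_path_join_loop[OF arc1 arc2, rotated 2])
      (simp_all add: polygon_path_start polygon_path_finish n[symmetric] closed)
  then show ?thesis by (simp add: n)
qed

section \<open>Continuous square roots along paths\<close>

lemma continuous_square_roots_agree:
  fixes f g :: "'a::topological_space \<Rightarrow> complex"
  assumes S: "connected S" "x \<in> S" "y \<in> S"
    and cont: "continuous_on S f" "continuous_on S g"
    and sq: "\<And>t. t \<in> S \<Longrightarrow> (f t)^2 = (g t)^2" and nz: "\<And>t. t \<in> S \<Longrightarrow> g t \<noteq> 0"
    and start: "f x = g x"
  shows "f y = g y"
proof -
  define h where "h t = f t / g t" for t
  have h_sign: "h t = 1 \<or> h t = -1" if "t \<in> S" for t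
  proof -
    have "(h t)^2 = 1" using sq[OF that] nz[OF that] by (simp add: h_def power_divide)
    then show ?thesis by (simp add: power2_eq_1_iff)
  qed
  have "h constant_on S"
  proof (rule continuous_discrete_range_constant[OF S(1)])
    show "continuous_on S h" unfolding h_def using cont nz by (intro continuous_intros) auto
    show "\<exists>e>0. \<forall>y. y \<in> S \<and> h y \<noteq> h x \<longrightarrow> e \<le> norm (h y - h x)" if "x \<in> S" for x
    proof (intro exI[of _ 1] conjI allI impI)
      fix y assume "y \<in> S \<and> h y \<noteq> h x"
      then show "1 \<le> norm (h y - h x)" using h_sign[of x] h_sign[of y] that by auto
    qed simp
  qed
  then have "h y = h x" using S by (auto simp: constant_on_def)
  then show ?thesis using start nz S by (simp add: h_def field_simps)
qed

lemma continuous_sqrt_lift_iff: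
  assumes g: "path g" "a \<notin> path_image g" and s: "s^2 = pathstart g - a"
  shows "(\<exists>f. continuous_on {0..1} f \<and> (\<forall>t\<in>{0..1}. (f t)^2 = g t - a) \<and> f 0 = s \<and> f 1 = z)
     \<longleftrightarrow> s * exp (pi * \<i> * winding_number g a) = z"
proof -
  let ?W = "winding_number g a"
  obtain q where q: "path q" "pathfinish q - pathstart q = 2 * of_real pi * \<i> * ?W"
      "\<And>t. t \<in> {0..1} \<Longrightarrow> g t = a + exp (q t)"
    using winding_number_as_continuous_log[OF g] by blast
  have "s^2 = (exp (q 0 / 2))^2"
    using s q(3)[of 0] by (simp add: pathstart_def power2_eq_square flip: exp_add)
  then obtain c where c: "c = 1 \<or> c = -1" "s = c * exp (q 0 / 2)"
    by (metis mult_1 mult_minus1 power2_eq_iff)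
  define G where "G t = c * exp (q t / 2)" for t
  have G_nz: "G t \<noteq> 0" for t using c(1) by (auto simp: G_def)
  have G_cont: "continuous_on {0..1} G"
    using q(1) unfolding G_def path_def by (intro continuous_intros) auto
  have G_sq: "(G t)^2 = g t - a" if "t \<in> {0..1}" for t
    using c(1) q(3)[OF that]
    by (auto simp: G_def power_mult_distrib power2_eq_square simp flip: exp_add)
  have G0: "G 0 = s" by (simp add: G_def c(2))
  have G1: "G 1 = s * exp (pi * \<i> * ?W)"
  proof -
    have "q 1 = q 0 + 2 * of_real pi * \<i> * ?W"
      using q(2) by (simp add: pathstart_def pathfinish_def algebra_simps)
    then show ?thesis
      by (simp add: G_def c(2) add_divide_distrib mult.assoc exp_add)
  qed
  show ?thesis
  proof
    assume "\<exists>f. continuous_on {0..1} f \<and> (\<forall>t\<in>{0..1}. (f t)^2 = g t - a) \<and> f 0 = s \<and> f 1 = z"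
    then obtain f where f: "continuous_on {0..1} f" "\<forall>t\<in>{0..1}. (f t)^2 = g t - a"
      "f 0 = s" "f 1 = z" by blast
    have "f 1 = G 1"
      by (rule continuous_square_roots_agree[of "{0..1}" 0 1 f G])
        (use f G_cont G_nz G_sq G0 in auto)
    then show "s * exp (pi * \<i> * ?W) = z" using f(4) G1 by simp
  next
    assume "s * exp (pi * \<i> * ?W) = z"
    then show "\<exists>f. continuous_on {0..1} f \<and> (\<forall>t\<in>{0..1}. (f t)^2 = g t - a) \<and> f 0 = s \<and> f 1 = z"
      using G_cont G_sq G0 G1 by blast
  qed
qed

lemma sheet_winding_char:
  assumes "w \<noteq> []" "a \<notin> path_image (polypath w)" "(hat (hd w))^2 = hd w - a"
  shows "sheet a hat w =
    (if hat (hd w) * exp (pi * \<i> * winding_number (polypath w) a) = hat (last w) then 1 else -1)"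
  unfolding sheet_def polypath_finish[OF assms(1), symmetric]
  using continuous_sqrt_lift_iff[OF path_polypath assms(2), of "hat (hd w)" "hat (last w)"]
    assms(3) polypath_start[OF assms(1)] polypath_finish[OF assms(1)]
  by (simp add: pathstart_def pathfinish_def)

definition root_at :: "complex \<Rightarrow> complex \<Rightarrow> complex" where
  "root_at a z = csqrt (z - a)"

definition seg_sign :: "complex \<Rightarrow> complex \<Rightarrow> complex \<Rightarrow> complex" where
  "seg_sign a x y = root_at a x * exp (pi * \<i> * seg_winding a x y) / root_at a y"

definition edge_sign :: "complex \<Rightarrow> complex set \<Rightarrow> complex" where
  "edge_sign a h = (let p = (SOME p. h = {fst p, snd p}) in seg_sign a (fst p) (snd p))"

lemma root_at_square: "(root_at a z)^2 = z - a"
  by (simp add: root_at_def)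

lemma root_at_nonzero: "z \<noteq> a \<Longrightarrow> root_at a z \<noteq> 0"
  by (simp add: root_at_def)

lemma seg_sign_square:
  assumes "a \<notin> closed_segment x y"
  shows "(seg_sign a x y)^2 = 1"
proof -
  have "x \<noteq> a" "y \<noteq> a" using assms by auto
  moreover have "exp (pi * \<i> * seg_winding a x y) ^ 2 = (y - a) / (x - a)"
    using exp_seg_winding[OF assms] by (simp add: exp_of_nat_mult[symmetric] mult.assoc)
  ultimately show ?thesis
    by (simp add: seg_sign_def power_mult_distrib power_divide root_at_square)
qed

lemma seg_sign_swap:
  assumes "a \<notin> closed_segment x y"
  shows "seg_sign a y x = seg_sign a x y"
proof -
  have "x \<noteq> a" "y \<noteq> a" using assms by auto
  then have "seg_sign a x y * seg_sign a y x = 1"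
    using root_at_nonzero[of x a] root_at_nonzero[of y a]
    by (simp add: seg_sign_def seg_winding_swap[OF assms] exp_minus field_simps)
  with seg_sign_square[OF assms] show ?thesis
    by (metis mult.left_neutral mult.assoc power2_eq_square)
qed

lemma edge_sign_doubleton:
  assumes "a \<notin> closed_segment x y"
  shows "edge_sign a {x, y} = seg_sign a x y"
proof -
  let ?p = "SOME p. {x, y} = {fst p, snd p}"
  have "{x, y} = {fst ?p, snd ?p}" by (rule someI[of _ "(x, y)"]) simp
  then have "?p = (x, y) \<or> ?p = (y, x)" by (auto simp: doubleton_eq_iff prod_eq_iff)
  then show ?thesis using seg_sign_swap[OF assms] by (auto simp: edge_sign_def Let_def)
qed

lemma exp_winding_telescope:
  assumes "w \<noteq> []" "\<forall>k < length w - 1. a \<notin> closed_segment (w!k) (w!Suc k)"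
  shows "(\<Prod>k<length w - 1. exp (pi * \<i> * seg_winding a (w!k) (w!Suc k))) * root_at a (hd w)
       = (\<Prod>k<length w - 1. seg_sign a (w!k) (w!Suc k)) * root_at a (last w)"
  using assms
proof (induction w rule: polypath.induct)
  case (3 p q rest)
  let ?E = "\<lambda>k. exp (pi * \<i> * seg_winding a ((q#rest)!k) ((q#rest)!Suc k))"
  let ?S = "\<lambda>k. seg_sign a ((q#rest)!k) ((q#rest)!Suc k)"
  have pq: "a \<notin> closed_segment p q" using "3.prems"(2) by auto
  have "\<forall>k<length (q # rest) - 1. a \<notin> closed_segment ((q # rest) ! k) ((q # rest) ! Suc k)"
  proof (intro allI impI)
    fix k assume "k < length (q # rest) - 1"
    then show "a \<notin> closed_segment ((q # rest) ! k) ((q # rest) ! Suc k)"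
      using "3.prems"(2)[rule_format, of "Suc k"] by simp
  qed
  then have IH: "(\<Prod>k<length rest. ?E k) * root_at a q
      = (\<Prod>k<length rest. ?S k) * root_at a (last (q#rest))"
    using "3.IH" by simp
  have "q \<noteq> a" using pq ends_in_segment(2)[of p q] by auto
  then have step: "exp (pi * \<i> * seg_winding a p q) * root_at a p = seg_sign a p q * root_at a q"
    using root_at_nonzero[of q a] by (simp add: seg_sign_def)
  have "(\<Prod>k<length (p#q#rest) - 1. exp (pi * \<i> * seg_winding a ((p#q#rest)!k) ((p#q#rest)!Suc k)))
      * root_at a (hd (p#q#rest))
      = (\<Prod>k<length rest. ?E k) * (exp (pi * \<i> * seg_winding a p q) * root_at a p)"
    by (simp add: prod.lessThan_Suc_shift del: prod.lessThan_Suc)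
  also have "\<dots> = (\<Prod>k<length rest. ?E k) * (seg_sign a p q * root_at a q)"
    by (simp only: step)
  also have "\<dots> = seg_sign a p q * ((\<Prod>k<length rest. ?E k) * root_at a q)"
    by (simp only: ac_simps)
  also have "\<dots> = seg_sign a p q * ((\<Prod>k<length rest. ?S k) * root_at a (last (q#rest)))"
    by (simp only: IH)
  also have "\<dots> = (\<Prod>k<length (p#q#rest) - 1. seg_sign a ((p#q#rest)!k) ((p#q#rest)!Suc k))
      * root_at a (last (p#q#rest))"
    by (simp add: prod.lessThan_Suc_shift del: prod.lessThan_Suc)
  finally show ?case .
qed simp_all

section \<open>Taxicab geometry of the Gaussian integers\<close>

definition gauss_int :: "complex \<Rightarrow> bool" where
  "gauss_int z \<longleftrightarrow> (\<exists>x y :: int. z = Complex (of_int x) (of_int y))"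

definition axis_unit :: "complex \<Rightarrow> bool" where
  "axis_unit e \<longleftrightarrow> e = 1 \<or> e = -1 \<or> e = \<i> \<or> e = -\<i>"

definition taxi_norm :: "complex \<Rightarrow> real" where
  "taxi_norm z = \<bar>Re z\<bar> + \<bar>Im z\<bar>"

definition taxi_ball :: "complex \<Rightarrow> real \<Rightarrow> complex set" where
  "taxi_ball c \<rho> = {z. taxi_norm (z - c) \<le> \<rho>}"

lemma taxi_norm_0 [simp]: "taxi_norm 0 = 0"
  by (simp add: taxi_norm_def)

lemma taxi_norm_commute: "taxi_norm (x - y) = taxi_norm (y - x)"
  by (simp add: taxi_norm_def abs_minus_commute)

lemma taxi_norm_triangle: "taxi_norm (x - z) \<le> taxi_norm (x - y) + taxi_norm (y - z)"
  using abs_triangle_ineq[of "Re (x - y)" "Re (y - z)"]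
    abs_triangle_ineq[of "Im (x - y)" "Im (y - z)"]
  by (simp add: taxi_norm_def)

lemma axis_unit_nonzero: "axis_unit e \<Longrightarrow> e \<noteq> 0"
  by (auto simp: axis_unit_def)

lemma axis_unit_uminus: "axis_unit e \<Longrightarrow> axis_unit (-e)"
  by (auto simp: axis_unit_def)

lemma taxi_norm_axis_unit: "axis_unit e \<Longrightarrow> taxi_norm (of_real s * e) = \<bar>s\<bar>"
  by (auto simp: axis_unit_def taxi_norm_def)

lemma taxi_norm_axis_unit_fractions:
  assumes "axis_unit e"
  shows "taxi_norm (e/4) = 1/4" "taxi_norm (-e/4) = 1/4" "taxi_norm (e/2) = 1/2"
    "taxi_norm (3*e/4) = 3/4"
  using assms by (auto simp: axis_unit_def taxi_norm_def)

lemma taxi_ballI: "z - c = d \<Longrightarrow> taxi_norm d \<le> \<rho> \<Longrightarrow> z \<in> taxi_ball c \<rho>"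
  by (simp add: taxi_ball_def)

lemma convex_taxi_ball: "convex (taxi_ball c r)"
  unfolding convex_alt taxi_ball_def
proof (intro ballI allI impI)
  fix x y :: complex and u :: real
  assume x: "x \<in> {z. taxi_norm (z - c) \<le> r}" and y: "y \<in> {z. taxi_norm (z - c) \<le> r}"
    and u: "0 \<le> u \<and> u \<le> 1"
  have comb: "\<bar>(1 - u) * A + u * B\<bar> \<le> (1 - u) * \<bar>A\<bar> + u * \<bar>B\<bar>" for A B :: real
    using abs_triangle_ineq[of "(1 - u) * A" "u * B"] u by (simp add: abs_mult)
  have "taxi_norm ((1 - u) *\<^sub>R x + u *\<^sub>R y - c)
      \<le> (1 - u) * taxi_norm (x - c) + u * taxi_norm (y - c)"
    using comb[of "Re (x - c)" "Re (y - c)"] comb[of "Im (x - c)" "Im (y - c)"]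
    by (simp add: taxi_norm_def algebra_simps)
  also have "\<dots> \<le> (1 - u) * r + u * r"
    using x y u by (intro add_mono mult_left_mono) auto
  finally show "(1 - u) *\<^sub>R x + u *\<^sub>R y \<in> {z. taxi_norm (z - c) \<le> r}" by (simp add: algebra_simps)
qed

lemma closed_segment_taxi_ball:
  "x \<in> taxi_ball c \<rho> \<Longrightarrow> y \<in> taxi_ball c \<rho> \<Longrightarrow> closed_segment x y \<subseteq> taxi_ball c \<rho>"
  by (rule closed_segment_subset[OF _ _ convex_taxi_ball])

lemma taxi_ball_overlap: "p \<in> taxi_ball c \<rho> \<Longrightarrow> p \<in> taxi_ball c' \<rho>' \<Longrightarrow> taxi_norm (c - c') \<le> \<rho> + \<rho>'"
  unfolding taxi_ball_def using taxi_norm_triangle[of c c' p] taxi_norm_commute[of c p] by auto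

lemma gauss_int_add: "gauss_int x \<Longrightarrow> gauss_int y \<Longrightarrow> gauss_int (x + y)"
proof -
  assume "gauss_int x" "gauss_int y"
  then obtain a b c d :: int
    where "x = Complex (of_int a) (of_int b)" "y = Complex (of_int c) (of_int d)"
    by (auto simp: gauss_int_def)
  then show "gauss_int (x + y)"
    unfolding gauss_int_def
    by (intro exI[of _ "a + c"] exI[of _ "b + d"]) (simp add: complex_eq_iff)
qed

lemma gauss_int_1: "gauss_int 1"
  unfolding gauss_int_def by (intro exI[of _ 1] exI[of _ 0]) (simp add: complex_eq_iff)

lemma gauss_int_i: "gauss_int \<i>"
  unfolding gauss_int_def by (intro exI[of _ 0] exI[of _ 1]) (simp add: complex_eq_iff)

lemma gauss_int_axis_unit: "axis_unit e \<Longrightarrow> gauss_int e"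
  using gauss_int_1 gauss_int_i unfolding axis_unit_def gauss_int_def
  by (auto intro: exI[of _ "-1::int"] exI[of _ "0::int"] exI[of _ "1::int"] simp: complex_eq_iff)

lemma half_pointE:
  assumes "gauss_int v" "axis_unit e"
  obtains x y :: int where "v + e/2 = Complex (of_int x / 2) (of_int y / 2)" "odd (x + y)"
proof -
  obtain a b :: int where v: "v = Complex (of_int a) (of_int b)" using assms(1)
    by (auto simp: gauss_int_def)
  consider "e = 1" | "e = -1" | "e = \<i>" | "e = -\<i>" using assms(2) by (auto simp: axis_unit_def)
  then show ?thesis
  proof cases
    case 1 then show ?thesis by (intro that[of "2*a+1" "2*b"]) (auto simp: v complex_eq_iff)
  next
    case 2 then show ?thesis by (intro that[of "2*a-1" "2*b"]) (auto simp: v complex_eq_iff)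
  next
    case 3 then show ?thesis by (intro that[of "2*a" "2*b+1"]) (auto simp: v complex_eq_iff)
  next
    case 4 then show ?thesis by (intro that[of "2*a" "2*b-1"]) (auto simp: v complex_eq_iff)
  qed
qed

lemma gauss_int_taxi_dist: assumes "gauss_int v" "gauss_int w" "v \<noteq> w" shows "taxi_norm (v - w) \<ge> 1"
proof -
  obtain a b c d :: int
    where v: "v = Complex (of_int a) (of_int b)" and w: "w = Complex (of_int c) (of_int d)"
    using assms by (auto simp: gauss_int_def)
  have "(a, b) \<noteq> (c, d)" using assms(3) v w by auto
  then have "\<bar>a - c\<bar> + \<bar>b - d\<bar> \<ge> 1" by auto
  then have "real_of_int (\<bar>a - c\<bar> + \<bar>b - d\<bar>) \<ge> 1" by linarith
  then show ?thesis by (simp add: v w taxi_norm_def)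
qed

lemma half_point_taxi_dist:
  assumes "gauss_int v" "axis_unit e" "gauss_int w" "axis_unit f" "v + e/2 \<noteq> w + f/2"
  shows "taxi_norm ((v + e/2) - (w + f/2)) \<ge> 1"
proof -
  obtain a b where ab: "v + e/2 = Complex (of_int a / 2) (of_int b / 2)" "odd (a + b)"
    using half_pointE[OF assms(1,2)] by blast
  obtain c d where cd: "w + f/2 = Complex (of_int c / 2) (of_int d / 2)" "odd (c + d)"
    using half_pointE[OF assms(3,4)] by blast
  have "a \<noteq> c \<or> b \<noteq> d" using assms(5) ab cd by auto
  then have "\<bar>a - c\<bar> + \<bar>b - d\<bar> \<ge> 2" using ab(2) cd(2) unfolding abs_if by presburger
  then have "real_of_int (\<bar>a - c\<bar> + \<bar>b - d\<bar>) \<ge> 2" by linarith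
  then have "\<bar>real_of_int a - real_of_int c\<bar> + \<bar>real_of_int b - real_of_int d\<bar> \<ge> 2" by simp
  then show ?thesis unfolding ab cd taxi_norm_def
    by (simp add: abs_divide diff_divide_distrib[symmetric])
qed

lemma half_point_near_gauss_int:
  assumes "gauss_int v" "gauss_int u" "axis_unit e" "taxi_norm (v - (u + e/2)) < 3/2"
  obtains f where "axis_unit f" "u + e/2 = v + f/2"
proof -
  obtain a b :: int where v: "v = Complex (of_int a) (of_int b)" using assms(1)
    by (auto simp: gauss_int_def)
  obtain c d where cd: "u + e/2 = Complex (of_int c / 2) (of_int d / 2)" "odd (c + d)"
    using half_pointE[OF assms(2,3)] by blast
  have "\<bar>real_of_int a - real_of_int c / 2\<bar> + \<bar>real_of_int b - real_of_int d / 2\<bar> < 3/2"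
    using assms(4) unfolding cd v taxi_norm_def by simp
  then have "\<bar>2 * real_of_int a - real_of_int c\<bar> + \<bar>2 * real_of_int b - real_of_int d\<bar> < 3"
    by linarith
  then have "real_of_int (\<bar>2*a - c\<bar> + \<bar>2*b - d\<bar>) < 3" by simp
  then have lt: "\<bar>2*a - c\<bar> + \<bar>2*b - d\<bar> < 3" by linarith
  have cases: "(c = 2*a+1 \<and> d = 2*b) \<or> (c = 2*a-1 \<and> d = 2*b)
      \<or> (c = 2*a \<and> d = 2*b+1) \<or> (c = 2*a \<and> d = 2*b-1)"
    using lt cd(2) by presburger
  then show ?thesis
  proof (elim disjE)
    assume h: "c = 2*a+1 \<and> d = 2*b" show ?thesis
    proof (rule that[of 1])
      show "u + e / 2 = v + 1 / 2" unfolding cd(1) v using h by (simp add: complex_eq_iff)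
    qed (simp add: axis_unit_def)
  next
    assume h: "c = 2*a-1 \<and> d = 2*b" show ?thesis
    proof (rule that[of "-1"])
      show "u + e / 2 = v + (-1) / 2" unfolding cd(1) v using h by (simp add: complex_eq_iff)
    qed (simp add: axis_unit_def)
  next
    assume h: "c = 2*a \<and> d = 2*b+1" show ?thesis
    proof (rule that[of "\<i>"])
      show "u + e / 2 = v + \<i> / 2" unfolding cd(1) v using h by (simp add: complex_eq_iff)
    qed (simp add: axis_unit_def)
  next
    assume h: "c = 2*a \<and> d = 2*b-1" show ?thesis
    proof (rule that[of "-\<i>"])
      show "u + e / 2 = v + (-\<i>) / 2" unfolding cd(1) v using h by (simp add: complex_eq_iff)
    qed (simp add: axis_unit_def)
  qed
qed

lemma taxi_norm_face_center: assumes "gauss_int v" shows "taxi_norm ((1 + \<i>)/2 - v) \<ge> 1"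
proof -
  obtain a b :: int where v: "v = Complex (of_int a) (of_int b)" using assms
    by (auto simp: gauss_int_def)
  have "\<bar>1 - 2*a\<bar> \<ge> 1" "\<bar>1 - 2*b\<bar> \<ge> 1" by presburger+
  then have "real_of_int \<bar>1 - 2*a\<bar> \<ge> 1" "real_of_int \<bar>1 - 2*b\<bar> \<ge> 1" by linarith+
  then have "\<bar>1 - 2 * real_of_int a\<bar> + \<bar>1 - 2 * real_of_int b\<bar> \<ge> 2" by simp
  then show ?thesis by (simp add: v taxi_norm_def complex_eq_iff)
qed

lemma half_point_not_gauss_int: assumes "gauss_int v" "axis_unit e" shows "\<not> gauss_int (v + e/2)"
proof
  assume "gauss_int (v + e/2)"
  then obtain x y :: int where xy: "v + e/2 = Complex (of_int x) (of_int y)"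
    by (auto simp: gauss_int_def)
  obtain c d where cd: "v + e/2 = Complex (of_int c / 2) (of_int d / 2)" "odd (c + d)"
    using half_pointE[OF assms] by blast
  have "real_of_int c = real_of_int (2*x)" "real_of_int d = real_of_int (2*y)" using xy cd(1)
    by (auto simp: complex_eq_iff)
  then have "c = 2*x" "d = 2*y" by linarith+
  then show False using cd(2) by presburger
qed

lemma axis_unitE:
  assumes "axis_unit e"
  obtains p q :: int where "e = Complex (of_int p) (of_int q)" "\<bar>p\<bar> + \<bar>q\<bar> = 1"
proof -
  consider "e = 1" | "e = -1" | "e = \<i>" | "e = -\<i>" using assms unfolding axis_unit_def by blast
  then show ?thesis
  proof cases
    case 1 show ?thesis by (rule that[of 1 0]) (simp_all add: 1 complex_eq_iff)
  next
    case 2 show ?thesis by (rule that[of "-1" 0]) (simp_all add: 2 complex_eq_iff)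
  next
    case 3 show ?thesis by (rule that[of 0 1]) (simp_all add: 3 complex_eq_iff)
  next
    case 4 show ?thesis by (rule that[of 0 "-1"]) (simp_all add: 4 complex_eq_iff)
  qed
qed

lemma int_axis_unit_cases:
  fixes p q :: int
  assumes "\<bar>p\<bar> + \<bar>q\<bar> = 1"
  shows "(p = 1 \<and> q = 0) \<or> (p = -1 \<and> q = 0) \<or> (p = 0 \<and> q = 1) \<or> (p = 0 \<and> q = -1)"
  using assms by (cases "p \<ge> 0"; cases "q \<ge> 0") auto

lemma int_half_point_eq_cases:
  fixes a b c d p q p' q' :: int
  assumes "2*a + p = 2*c + p'" "2*b + q = 2*d + q'" "\<bar>p\<bar> + \<bar>q\<bar> = 1" "\<bar>p'\<bar> + \<bar>q'\<bar> = 1"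
  shows "(c = a \<and> d = b \<and> p' = p \<and> q' = q) \<or> (c = a + p \<and> d = b + q \<and> p' = -p \<and> q' = -q)"
  using int_axis_unit_cases[OF assms(3)] int_axis_unit_cases[OF assms(4)] assms(1,2)
  by (elim disjE) presburger+

lemma int_quarter_point_eq:
  fixes a b c d p q p' q' :: int
  assumes "4*a + p = 4*c + p'" "4*b + q = 4*d + q'" "\<bar>p\<bar> + \<bar>q\<bar> = 1" "\<bar>p'\<bar> + \<bar>q'\<bar> = 1"
  shows "c = a \<and> d = b \<and> p' = p \<and> q' = q"
  using int_axis_unit_cases[OF assms(3)] int_axis_unit_cases[OF assms(4)] assms(1,2)
  by (elim disjE) presburger+

lemma half_point_eq_cases:
  assumes "gauss_int v" "gauss_int w" "axis_unit e" "axis_unit f" "v + e/2 = w + f/2"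
  shows "(w = v \<and> f = e) \<or> (w = v + e \<and> f = -e)"
proof -
  obtain a b :: int where v: "v = Complex (of_int a) (of_int b)" using assms(1)
    by (auto simp: gauss_int_def)
  obtain c d :: int where w: "w = Complex (of_int c) (of_int d)" using assms(2)
    by (auto simp: gauss_int_def)
  obtain p q :: int where e: "e = Complex (of_int p) (of_int q)" "\<bar>p\<bar> + \<bar>q\<bar> = 1"
    using axis_unitE[OF assms(3)] by blast
  obtain p' q' :: int where f: "f = Complex (of_int p') (of_int q')" "\<bar>p'\<bar> + \<bar>q'\<bar> = 1"
    using axis_unitE[OF assms(4)] by blast
  have "real_of_int a + real_of_int p / 2 = real_of_int c + real_of_int p' / 2"
       "real_of_int b + real_of_int q / 2 = real_of_int d + real_of_int q' / 2"
    using assms(5) by (auto simp: v w e f complex_eq_iff)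
  then have "real_of_int (2*a + p) = real_of_int (2*c + p')"
    "real_of_int (2*b + q) = real_of_int (2*d + q')"
    by simp_all
  then have h: "2*a + p = 2*c + p'" "2*b + q = 2*d + q'" by (simp_all only: of_int_eq_iff)
  have "(c = a \<and> d = b \<and> p' = p \<and> q' = q) \<or> (c = a + p \<and> d = b + q \<and> p' = -p \<and> q' = -q)"
    using h e(2) f(2) by (rule int_half_point_eq_cases)
  then show ?thesis by (auto simp: v w e f complex_eq_iff)
qed

lemma quarter_point_inj:
  assumes "gauss_int v" "gauss_int w" "axis_unit e" "axis_unit f" "v + e/4 = w + f/4"
  shows "w = v \<and> f = e"
proof -
  obtain a b :: int where v: "v = Complex (of_int a) (of_int b)" using assms(1)
    by (auto simp: gauss_int_def)
  obtain c d :: int where w: "w = Complex (of_int c) (of_int d)" using assms(2)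
    by (auto simp: gauss_int_def)
  obtain p q :: int where e: "e = Complex (of_int p) (of_int q)" "\<bar>p\<bar> + \<bar>q\<bar> = 1"
    using axis_unitE[OF assms(3)] by blast
  obtain p' q' :: int where f: "f = Complex (of_int p') (of_int q')" "\<bar>p'\<bar> + \<bar>q'\<bar> = 1"
    using axis_unitE[OF assms(4)] by blast
  have "real_of_int a + real_of_int p / 4 = real_of_int c + real_of_int p' / 4"
       "real_of_int b + real_of_int q / 4 = real_of_int d + real_of_int q' / 4"
    using assms(5) by (auto simp: v w e f complex_eq_iff)
  then have "real_of_int (4*a + p) = real_of_int (4*c + p')"
    "real_of_int (4*b + q) = real_of_int (4*d + q')"
    by simp_all
  then have h: "4*a + p = 4*c + p'" "4*b + q = 4*d + q'" by (simp_all only: of_int_eq_iff)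
  have "c = a \<and> d = b \<and> p' = p \<and> q' = q"
    using h e(2) f(2) by (rule int_quarter_point_eq)
  then show ?thesis by (auto simp: v w e f complex_eq_iff)
qed

lemma chord_axis_unit_endpoint:
  assumes "axis_unit e1" "axis_unit e2" "axis_unit f" "e1 \<noteq> e2" "0 \<le> t" "t \<le> 1"
    and "of_real (1 - t) * e1 + of_real t * e2 = f"
  shows "f = e1 \<or> f = e2"
proof -
  have "t = 0 \<or> t = 1"
    using assms unfolding axis_unit_def
    by (elim disjE; simp add: complex_eq_iff; linarith)
  then show ?thesis using assms(7) by auto
qed

lemma turning_chords_disjoint:
  assumes "axis_unit e1" "axis_unit e2" "axis_unit e3" "axis_unit e4"
    and "e1 \<noteq> e2" "e1 \<noteq> e3" "e1 \<noteq> e4" "e2 \<noteq> e3" "e2 \<noteq> e4" "e3 \<noteq> e4"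
    and "e1 + e2 \<noteq> 0" "e3 + e4 \<noteq> 0"
    and "0 \<le> t" "t \<le> 1" "0 \<le> s" "s \<le> 1"
  shows "of_real (1 - t) * e1 + of_real t * e2 \<noteq> of_real (1 - s) * e3 + of_real s * e4"
  using assms unfolding axis_unit_def
  by (elim disjE; simp add: complex_eq_iff; linarith)

section \<open>Noncrossing closed trails of lattice half-edges\<close>

definition lattice_half_edge :: "complex set \<Rightarrow> bool" where
  "lattice_half_edge h \<longleftrightarrow> (\<exists>v e. gauss_int v \<and> axis_unit e \<and> h = {v + e/2, v})"

definition step_edge :: "(nat \<Rightarrow> complex) \<Rightarrow> nat \<Rightarrow> complex set" where
  "step_edge L k = {L k, L (Suc k)}"

lemma closed_segmentE:
  assumes "p \<in> closed_segment x y"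
  obtains t :: real where "0 \<le> t" "t \<le> 1" "p = of_real (1 - t) * x + of_real t * y"
  using assms unfolding closed_segment_def by (auto simp: scaleR_conv_of_real)

lemma chord_param_turn:
  assumes "p = of_real (1 - t) * (v + x/4) + of_real t * (v + y/4)"
  shows "4 * (p - v) = of_real (1 - t) * x + of_real t * (y::complex)"
proof -
  define \<alpha> \<beta> where "\<alpha> = (of_real (1 - t) :: complex)" and "\<beta> = (of_real t :: complex)"
  have "4 * (p - v) = \<alpha> * x + \<beta> * y + 4 * v * (\<alpha> + \<beta> - 1)"
    unfolding assms \<alpha>_def[symmetric] \<beta>_def[symmetric] by (simp add: algebra_simps)
  moreover have "\<alpha> + \<beta> = 1" by (simp add: \<alpha>_def \<beta>_def)
  ultimately show ?thesis by (simp add: \<alpha>_def \<beta>_def)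
qed

lemma chord_param_straight:
  assumes "p = of_real (1 - t) * (u + e/4) + of_real t * (u + 3*e/4)"
  shows "p - u = of_real ((1 - t)/4 + 3*t/4) * (e::complex)"
proof -
  have four: "4 * (p - u) = of_real (1 - t) * e + of_real t * (3*e)"
    by (rule chord_param_turn) (simp add: assms)
  have "p - u = (4 * (p - u)) / 4" by simp
  also have "\<dots> = (of_real (1 - t) * e + of_real t * (3*e)) / 4" by (simp only: four)
  also have "\<dots> = of_real ((1 - t)/4 + 3*t/4) * e" by (simp add: field_simps)
  finally show ?thesis .
qed

lemma mod_Suc_neq: "2 \<le> r \<Longrightarrow> k mod r \<noteq> Suc k mod (r::nat)"
  by (metis One_nat_def le_antisym mod_Suc mod_less_divisor not_less_eq_eq not_numeral_le_zero
      numeral_2_eq_2 zero_less_Suc)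

text \<open>Indices are periodic modulo \<open>r\<close>, so \<open>L (j + r - 1)\<close> is the point preceding \<open>L j\<close>.\<close>

locale lattice_loop =
  fixes L :: "nat \<Rightarrow> complex" and r :: nat
  assumes length_ge_3: "3 \<le> r"
    and periodic: "\<And>k. L (k mod r) = L k"
    and half_edge_steps: "\<And>k. lattice_half_edge (step_edge L k)"
    and steps_distinct: "\<And>j k. j < r \<Longrightarrow> k < r \<Longrightarrow> step_edge L j = step_edge L k \<Longrightarrow> j = k"
    and non_crossing: "\<And>j. j < r \<Longrightarrow> gauss_int (L j) \<Longrightarrow>
      4 \<le> card {step_edge L i | i. i < r \<and> L j \<in> step_edge L i} \<Longrightarrow>
      L (j + r - 1) + L (Suc j) \<noteq> 2 * L j"
begin

definition step_mid :: "nat \<Rightarrow> complex" where "step_mid k = (L k + L (Suc k)) / 2"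

lemma r_pos: "0 < r" using length_ge_3 by simp

lemma L_Suc_mod_cong: "k mod r = j mod r \<Longrightarrow> L (Suc k) = L (Suc j)"
  by (metis mod_Suc_eq periodic)

lemma step_edge_mod: "step_edge L k = step_edge L (k mod r)"
  unfolding step_edge_def by (metis mod_mod_trivial L_Suc_mod_cong periodic)

lemma step_edge_eq_mod: "step_edge L j = step_edge L k \<Longrightarrow> j mod r = k mod r"
  using steps_distinct[of "j mod r" "k mod r"] step_edge_mod[of j] step_edge_mod[of k] r_pos by simp

lemma step_shape:
  "(gauss_int (L k) \<and> (\<exists>e. axis_unit e \<and> L (Suc k) = L k + e/2)) \<or>
   (gauss_int (L (Suc k)) \<and> (\<exists>e. axis_unit e \<and> L k = L (Suc k) + e/2))"
proof -
  obtain v e where ve: "gauss_int v" "axis_unit e" "{L k, L (Suc k)} = {v + e/2, v}"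
    using half_edge_steps[of k] by (auto simp: lattice_half_edge_def step_edge_def)
  have "v + e/2 \<noteq> v" using axis_unit_nonzero[OF ve(2)] by simp
  then have "(L k = v + e/2 \<and> L (Suc k) = v) \<or> (L k = v \<and> L (Suc k) = v + e/2)"
    using ve(3) by (auto simp: doubleton_eq_iff)
  then show ?thesis using ve by auto
qed

lemma gauss_int_alternates: "gauss_int (L (Suc k)) \<longleftrightarrow> \<not> gauss_int (L k)"
  using step_shape[of k] half_point_not_gauss_int by auto

lemma consecutive_steps_distinct: "step_edge L k \<noteq> step_edge L (Suc k)"
  using step_edge_eq_mod[of k "Suc k"] mod_Suc_neq[of r k] length_ge_3 by auto

lemma turn_at_vertex:
  assumes "gauss_int (L (Suc k))"
  obtains e1 e2 where "axis_unit e1" "axis_unit e2" "L k = L (Suc k) + e1/2"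
    "L (Suc (Suc k)) = L (Suc k) + e2/2" "e1 \<noteq> e2"
proof -
  have "\<not> gauss_int (L k)" using assms gauss_int_alternates by simp
  then obtain e1 where e1: "axis_unit e1" "L k = L (Suc k) + e1/2" using step_shape[of k] by auto
  have "\<not> gauss_int (L (Suc (Suc k)))" using assms gauss_int_alternates by simp
  then obtain e2 where e2: "axis_unit e2" "L (Suc (Suc k)) = L (Suc k) + e2/2"
    using step_shape[of "Suc k"] by auto
  have "e1 \<noteq> e2"
  proof
    assume "e1 = e2"
    then have "step_edge L k = step_edge L (Suc k)" using e1 e2 by (auto simp: step_edge_def)
    then show False using consecutive_steps_distinct by simp
  qed
  then show ?thesis using that e1 e2 by blast
qed

lemma straight_at_midpoint:
  assumes "\<not> gauss_int (L (Suc k))"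
  obtains u e where "gauss_int u" "axis_unit e" "L k = u" "L (Suc k) = u + e/2"
    "L (Suc (Suc k)) = u + e"
proof -
  have g0: "gauss_int (L k)" using assms gauss_int_alternates by simp
  then obtain e where e: "axis_unit e" "L (Suc k) = L k + e/2" using step_shape[of k] assms by auto
  have g2: "gauss_int (L (Suc (Suc k)))" using assms gauss_int_alternates by simp
  then obtain f where f: "axis_unit f" "L (Suc k) = L (Suc (Suc k)) + f/2"
    using step_shape[of "Suc k"] assms by auto
  have "(L (Suc (Suc k)) = L k \<and> f = e) \<or> (L (Suc (Suc k)) = L k + e \<and> f = -e)"
    using half_point_eq_cases[OF g0 g2 e(1) f(1)] e(2) f(2) by simp
  moreover have "L (Suc (Suc k)) \<noteq> L k"
  proof
    assume "L (Suc (Suc k)) = L k"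
    then have "step_edge L k = step_edge L (Suc k)" by (auto simp: step_edge_def)
    then show False using consecutive_steps_distinct by simp
  qed
  ultimately have "L (Suc (Suc k)) = L k + e" by auto
  then show ?thesis using that g0 e by blast
qed

lemma step_mid_form:
  "\<exists>v e. gauss_int v \<and> axis_unit e \<and> step_mid k = v + e/4 \<and> step_edge L k = {v, v + e/2}"
proof -
  from step_shape[of k] show ?thesis
  proof (elim disjE conjE exE)
    fix e assume h: "gauss_int (L k)" "axis_unit e" "L (Suc k) = L k + e/2"
    show ?thesis
      by (rule exI[of _ "L k"], rule exI[of _ e])
        (simp add: h step_mid_def step_edge_def field_simps)
  next
    fix e assume h: "gauss_int (L (Suc k))" "axis_unit e" "L k = L (Suc k) + e/2"
    show ?thesis
      by (rule exI[of _ "L (Suc k)"], rule exI[of _ e])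
        (auto simp: h step_mid_def step_edge_def field_simps)
  qed
qed

lemma step_mid_inj: "j < r \<Longrightarrow> k < r \<Longrightarrow> step_mid j = step_mid k \<Longrightarrow> j = k"
proof -
  assume jk: "j < r" "k < r" "step_mid j = step_mid k"
  obtain v e where 1: "gauss_int v" "axis_unit e" "step_mid j = v + e/4"
    "step_edge L j = {v, v + e/2}" using step_mid_form by blast
  obtain w f where 2: "gauss_int w" "axis_unit f" "step_mid k = w + f/4"
    "step_edge L k = {w, w + f/2}" using step_mid_form by blast
  have "w = v \<and> f = e" using quarter_point_inj[OF 1(1) 2(1) 1(2) 2(2)] 1(3) 2(3) jk(3) by simp
  then have "step_edge L j = step_edge L k" using 1(4) 2(4) by simp
  then show "j = k" using steps_distinct jk by blast
qed

lemma Suc_mod_less: "j < r \<Longrightarrow> Suc j mod r = (if Suc j = r then 0 else Suc j)"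
  by (auto simp: mod_Suc)

lemma Suc_mod_inj: "j < r \<Longrightarrow> k < r \<Longrightarrow> Suc j mod r = Suc k mod r \<Longrightarrow> j = k"
  by (auto simp: Suc_mod_less split: if_splits)

lemma cut_segment_taxi_ball:
  "closed_segment (step_mid k) (step_mid (Suc k)) \<subseteq> taxi_ball (L (Suc k)) (1/4)"
proof (cases "gauss_int (L (Suc k))")
  case True
  then obtain e1 e2 where e: "axis_unit e1" "axis_unit e2" "L k = L (Suc k) + e1/2"
    "L (Suc (Suc k)) = L (Suc k) + e2/2"
    using turn_at_vertex by blast
  have "step_mid k = L (Suc k) + e1/4" unfolding step_mid_def e(3) by (simp add: field_simps)
  moreover have "step_mid (Suc k) = L (Suc k) + e2/4" unfolding step_mid_def e(4)
    by (simp add: field_simps)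
  ultimately show ?thesis
    using taxi_norm_axis_unit_fractions(1)[OF e(1)] taxi_norm_axis_unit_fractions(1)[OF e(2)]
    by (intro closed_segment_taxi_ball) (auto simp: taxi_ball_def)
next
  case False
  then obtain u e where e: "gauss_int u" "axis_unit e" "L k = u" "L (Suc k) = u + e/2"
    "L (Suc (Suc k)) = u + e"
    using straight_at_midpoint by blast
  have h1: "step_mid k - L (Suc k) = -e/4" unfolding step_mid_def e(3,4) by (simp add: field_simps)
  have h2: "step_mid (Suc k) - L (Suc k) = e/4" unfolding step_mid_def e(4,5)
    by (simp add: field_simps)
  have "step_mid k \<in> taxi_ball (L (Suc k)) (1/4)" unfolding taxi_ball_def mem_Collect_eq h1
    using taxi_norm_axis_unit_fractions(2)[OF e(2)] by simp
  moreover have "step_mid (Suc k) \<in> taxi_ball (L (Suc k)) (1/4)"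
    unfolding taxi_ball_def mem_Collect_eq h2 using taxi_norm_axis_unit_fractions(1)[OF e(2)]
    by simp
  ultimately show ?thesis by (rule closed_segment_taxi_ball)
qed

lemma cut_segments_disjoint_at_midpoints:
  assumes jk: "j < r" "k < r" "j \<noteq> k" and g: "\<not> gauss_int (L (Suc j))" "\<not> gauss_int (L (Suc k))"
  shows "closed_segment (step_mid j) (step_mid (Suc j))
      \<inter> closed_segment (step_mid k) (step_mid (Suc k)) = {}"
proof -
  obtain u e where ue: "gauss_int u" "axis_unit e" "L j = u" "L (Suc j) = u + e/2"
    "L (Suc (Suc j)) = u + e"
    using straight_at_midpoint[OF g(1)] by blast
  obtain w f where wf: "gauss_int w" "axis_unit f" "L k = w" "L (Suc k) = w + f/2"
    "L (Suc (Suc k)) = w + f"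
    using straight_at_midpoint[OF g(2)] by blast
  have ne: "L (Suc j) \<noteq> L (Suc k)"
  proof
    assume eq: "L (Suc j) = L (Suc k)"
    have "(w = u \<and> f = e) \<or> (w = u + e \<and> f = -e)"
      using half_point_eq_cases[OF ue(1) wf(1) ue(2) wf(2)] eq ue(4) wf(4) by simp
    then show False
    proof
      assume "w = u \<and> f = e"
      then have "step_edge L j = step_edge L k" using ue wf by (simp add: step_edge_def)
      then show False using steps_distinct jk by blast
    next
      assume h: "w = u + e \<and> f = -e"
      then have "step_edge L k = step_edge L (Suc j)" using ue wf eq by (auto simp: step_edge_def)
      then have "k mod r = Suc j mod r" by (rule step_edge_eq_mod)
      then have "L (Suc k) = L (Suc (Suc j))" by (rule L_Suc_mod_cong)
      moreover have "gauss_int (L (Suc (Suc j)))" using g(1) gauss_int_alternates by simp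
      ultimately show False using g(2) by simp
    qed
  qed
  have "taxi_norm (L (Suc j) - L (Suc k)) \<ge> 1"
    using half_point_taxi_dist[OF ue(1,2) wf(1,2)] ne ue(4) wf(4) by simp
  moreover have "taxi_norm (L (Suc j) - L (Suc k)) \<le> 1/2"
    if "p \<in> closed_segment (step_mid j) (step_mid (Suc j))"
      "p \<in> closed_segment (step_mid k) (step_mid (Suc k))" for p
    using taxi_ball_overlap[of p "L (Suc j)" "1/4" "L (Suc k)" "1/4"]
      cut_segment_taxi_ball[of j] cut_segment_taxi_ball[of k] that by auto
  ultimately show ?thesis by force
qed

lemma revisited_vertex_directions:
  assumes jk: "j < r" "k < r" "j \<noteq> k" and eq: "L (Suc j) = L (Suc k)"
    and e: "axis_unit e1" "axis_unit e2" "L j = L (Suc j) + e1/2"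
      "L (Suc (Suc j)) = L (Suc j) + e2/2"
    and f: "axis_unit e3" "axis_unit e4" "L k = L (Suc k) + e3/2"
      "L (Suc (Suc k)) = L (Suc k) + e4/2"
  shows "e1 \<noteq> e3" "e1 \<noteq> e4" "e2 \<noteq> e3" "e2 \<noteq> e4"
proof -
  have nz: "e1 \<noteq> 0" "e2 \<noteq> 0" "e3 \<noteq> 0" "e4 \<noteq> 0" using e f axis_unit_nonzero by auto
  show "e1 \<noteq> e3"
  proof
    assume "e1 = e3"
    then have "step_edge L j = step_edge L k" using e f eq by (simp add: step_edge_def)
    then show False using steps_distinct jk by blast
  qed
  show "e2 \<noteq> e4"
  proof
    assume "e2 = e4"
    then have "step_edge L (Suc j) = step_edge L (Suc k)" using e f eq by (simp add: step_edge_def)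
    then have "Suc j mod r = Suc k mod r" by (rule step_edge_eq_mod)
    then show False using Suc_mod_inj jk by blast
  qed
  show "e1 \<noteq> e4"
  proof
    assume "e1 = e4"
    then have "step_edge L j = step_edge L (Suc k)" using e f eq by (auto simp: step_edge_def)
    then have "L (Suc j) = L (Suc (Suc k))" by (intro L_Suc_mod_cong step_edge_eq_mod)
    then show False using f(4) eq nz by simp
  qed
  show "e2 \<noteq> e3"
  proof
    assume "e2 = e3"
    then have "step_edge L (Suc j) = step_edge L k" using e f eq by (auto simp: step_edge_def)
    then have "L (Suc (Suc j)) = L (Suc k)" by (intro L_Suc_mod_cong step_edge_eq_mod)
    then show False using e(4) eq nz by simp
  qed
qed

lemma revisited_vertex_four_steps:
  assumes jk: "j < r" "k < r" "j \<noteq> k" and eq: "L (Suc j) = L (Suc k)"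
    and e: "axis_unit e1" "axis_unit e2" "L j = L (Suc j) + e1/2"
      "L (Suc (Suc j)) = L (Suc j) + e2/2" "e1 \<noteq> e2"
    and f: "axis_unit e3" "axis_unit e4" "L k = L (Suc k) + e3/2"
      "L (Suc (Suc k)) = L (Suc k) + e4/2" "e3 \<noteq> e4"
  shows "4 \<le> card {step_edge L i | i. i < r \<and> L (Suc j) \<in> step_edge L i}"
proof -
  define v where "v = L (Suc j)"
  let ?S = "{step_edge L i | i. i < r \<and> v \<in> step_edge L i}"
  have mem: "step_edge L i \<in> ?S" if "v \<in> step_edge L i" for i
  proof -
    have "step_edge L (i mod r) \<in> ?S" using that step_edge_mod[of i] r_pos by auto
    then show ?thesis using step_edge_mod[of i] by simp
  qed
  have sub: "{step_edge L j, step_edge L k, step_edge L (Suc j), step_edge L (Suc k)} \<subseteq> ?S"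
    using mem[of j] mem[of k] mem[of "Suc j"] mem[of "Suc k"] eq
    by (simp add: step_edge_def v_def)
  have fin: "finite ?S" by (rule finite_subset[of _ "step_edge L ` {..<r}"]) auto
  have edges: "step_edge L j = {v, v + e1/2}" "step_edge L k = {v, v + e3/2}"
    "step_edge L (Suc j) = {v, v + e2/2}" "step_edge L (Suc k) = {v, v + e4/2}"
    using e f eq by (auto simp: step_edge_def v_def)
  have neq: "{v, v + x/2} \<noteq> {v, v + y/2}" if "x \<noteq> y" for x y :: complex
    using that by (auto simp: doubleton_eq_iff)
  have "card {step_edge L j, step_edge L k, step_edge L (Suc j), step_edge L (Suc k)} = 4"
    unfolding edges using revisited_vertex_directions[OF jk eq e(1-4) f(1-4)] e(5) f(5)
    by (simp add: neq neq[symmetric])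
  then show ?thesis using card_mono[OF fin sub] by (simp add: v_def)
qed

text \<open>A vertex visited twice meets four distinct steps of the loop, so the loop turns there.\<close>

lemma revisited_vertex_turns:
  assumes jk: "j < r" "k < r" "j \<noteq> k" and g: "gauss_int (L (Suc j))" and eq: "L (Suc j) = L (Suc k)"
    and e: "axis_unit e1" "axis_unit e2" "L j = L (Suc j) + e1/2"
      "L (Suc (Suc j)) = L (Suc j) + e2/2" "e1 \<noteq> e2"
    and f: "axis_unit e3" "axis_unit e4" "L k = L (Suc k) + e3/2"
      "L (Suc (Suc k)) = L (Suc k) + e4/2" "e3 \<noteq> e4"
  shows "e1 + e2 \<noteq> 0"
proof -
  define j' where "j' = Suc j mod r"
  have j'r: "j' < r" using r_pos by (simp add: j'_def)
  have Lj': "L j' = L (Suc j)" by (simp add: j'_def periodic)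
  have "L (j' + r - 1) + L (Suc j') \<noteq> 2 * L j'"
    using non_crossing[OF j'r] revisited_vertex_four_steps[OF jk eq e f] g Lj' by simp
  moreover have "L (j' + r - 1) = L j"
  proof -
    have "(j' + r - 1) mod r = j mod r" using jk by (auto simp: j'_def Suc_mod_less)
    then show ?thesis by (metis periodic)
  qed
  moreover have "L (Suc j') = L (Suc (Suc j))" by (rule L_Suc_mod_cong) (simp add: j'_def)
  ultimately have "L j + L (Suc (Suc j)) \<noteq> 2 * L (Suc j)" using Lj' by simp
  then show ?thesis
  proof (rule contrapos_nn)
    assume "e1 + e2 = 0"
    then have "e2 = - e1" by (simp add: add_eq_0_iff)
    then show "L j + L (Suc (Suc j)) = 2 * L (Suc j)" unfolding e(3) e(4) by simp
  qed
qed

lemma cut_segments_disjoint_at_revisited_vertex: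
  assumes jk: "j < r" "k < r" "j \<noteq> k" and g: "gauss_int (L (Suc j))" "gauss_int (L (Suc k))"
    and eq: "L (Suc j) = L (Suc k)"
  shows "closed_segment (step_mid j) (step_mid (Suc j))
      \<inter> closed_segment (step_mid k) (step_mid (Suc k)) = {}"
proof -
  obtain e1 e2 where e: "axis_unit e1" "axis_unit e2" "L j = L (Suc j) + e1/2"
    "L (Suc (Suc j)) = L (Suc j) + e2/2" "e1 \<noteq> e2"
    using turn_at_vertex[OF g(1)] by blast
  obtain e3 e4 where f: "axis_unit e3" "axis_unit e4" "L k = L (Suc k) + e3/2"
    "L (Suc (Suc k)) = L (Suc k) + e4/2" "e3 \<noteq> e4"
    using turn_at_vertex[OF g(2)] by blast
  note dirs = revisited_vertex_directions[OF jk eq e(1-4) f(1-4)]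
  note turn1 = revisited_vertex_turns[OF jk g(1) eq e f]
  note turn2 = revisited_vertex_turns[OF jk(2,1) jk(3)[symmetric] g(2) eq[symmetric] f e]
  define v where "v = L (Suc j)"
  have mid1: "step_mid j = v + e1/4" unfolding step_mid_def e(3) v_def by (simp add: field_simps)
  have mid2: "step_mid (Suc j) = v + e2/4" unfolding step_mid_def e(4) v_def
    by (simp add: field_simps)
  have mid3: "step_mid k = v + e3/4" unfolding step_mid_def f(3) v_def eq by (simp add: field_simps)
  have mid4: "step_mid (Suc k) = v + e4/4" unfolding step_mid_def f(4) v_def eq
    by (simp add: field_simps)
  note mid = mid1 mid2 mid3 mid4
  show ?thesis
  proof (rule ccontr)
    assume "closed_segment (step_mid j) (step_mid (Suc j))
        \<inter> closed_segment (step_mid k) (step_mid (Suc k)) \<noteq> {}"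
    then obtain p where p: "p \<in> closed_segment (step_mid j) (step_mid (Suc j))"
      "p \<in> closed_segment (step_mid k) (step_mid (Suc k))" by blast
    obtain t where t: "0 \<le> t" "t \<le> 1" "p = of_real (1 - t) * (v + e1/4) + of_real t * (v + e2/4)"
      using closed_segmentE[OF p(1)] unfolding mid by blast
    obtain s where s: "0 \<le> s" "s \<le> 1" "p = of_real (1 - s) * (v + e3/4) + of_real s * (v + e4/4)"
      using closed_segmentE[OF p(2)] unfolding mid by blast
    have "of_real (1 - t) * e1 + of_real t * e2 = of_real (1 - s) * e3 + of_real s * e4"
      using chord_param_turn[OF t(3)] chord_param_turn[OF s(3)] by simp
    moreover have "of_real (1 - t) * e1 + of_real t * e2 \<noteq> of_real (1 - s) * e3 + of_real s * e4"
      by (rule turning_chords_disjoint[OF e(1) e(2) f(1) f(2) e(5) dirs f(5) turn1 turn2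
            t(1) t(2) s(1) s(2)])
    ultimately show False by simp
  qed
qed

lemma cut_segments_disjoint_at_vertices:
  assumes jk: "j < r" "k < r" "j \<noteq> k" and g: "gauss_int (L (Suc j))" "gauss_int (L (Suc k))"
  shows "closed_segment (step_mid j) (step_mid (Suc j))
      \<inter> closed_segment (step_mid k) (step_mid (Suc k)) = {}"
proof (cases "L (Suc j) = L (Suc k)")
  case False
  have "taxi_norm (L (Suc j) - L (Suc k)) \<ge> 1" using gauss_int_taxi_dist[OF g False] .
  moreover have "taxi_norm (L (Suc j) - L (Suc k)) \<le> 1/2"
    if "p \<in> closed_segment (step_mid j) (step_mid (Suc j))"
      "p \<in> closed_segment (step_mid k) (step_mid (Suc k))" for p
    using taxi_ball_overlap[of p "L (Suc j)" "1/4" "L (Suc k)" "1/4"]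
      cut_segment_taxi_ball[of j] cut_segment_taxi_ball[of k] that by auto
  ultimately show ?thesis by force
next
  case True
  then show ?thesis by (rule cut_segments_disjoint_at_revisited_vertex[OF jk g])
qed

lemma straight_cut_near_vertex:
  assumes k: "\<not> gauss_int (L (Suc k))" and v: "gauss_int v"
    and p: "p \<in> closed_segment (step_mid k) (step_mid (Suc k))"
    and pv: "taxi_norm (p - v) \<le> 1/4"
  obtains f where "axis_unit f" "p = v + f/4" "p \<in> {step_mid k, step_mid (Suc k)}"
proof -
  obtain u e where ue: "gauss_int u" "axis_unit e" "L k = u" "L (Suc k) = u + e/2"
    "L (Suc (Suc k)) = u + e"
    using straight_at_midpoint[OF k] by blast
  have mid: "step_mid k = u + e/4" "step_mid (Suc k) = u + 3*e/4"
    unfolding step_mid_def ue(3-5) by (simp_all add: field_simps)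
  have "p \<in> taxi_ball v (1/4)" using pv by (simp add: taxi_ball_def)
  moreover have "p \<in> taxi_ball (L (Suc k)) (1/4)" using cut_segment_taxi_ball[of k] p by blast
  ultimately have "taxi_norm (v - L (Suc k)) \<le> 1/4 + 1/4" by (rule taxi_ball_overlap)
  then have "taxi_norm (v - (u + e/2)) < 3/2" using ue(4) by simp
  then obtain f where f: "axis_unit f" "u + e/2 = v + f/2"
    using half_point_near_gauss_int[OF v ue(1,2)] by blast
  obtain t where t: "0 \<le> t" "t \<le> 1" "p = of_real (1 - t) * (u + e/4) + of_real t * (u + 3*e/4)"
    using closed_segmentE[OF p] unfolding mid by blast
  have pu: "p - u = of_real ((1 - t)/4 + 3*t/4) * e" using chord_param_straight[OF t(3)] .
  from half_point_eq_cases[OF ue(1) v ue(2) f] show ?thesis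
  proof
    assume h: "v = u \<and> f = e"
    have "taxi_norm (p - v) = \<bar>(1 - t)/4 + 3*t/4\<bar>"
      using pu h taxi_norm_axis_unit[OF ue(2)] by metis
    then have "t = 0" using pv t(1) by (simp add: abs_le_iff field_simps)
    then show ?thesis using that[OF f(1)] h t(3) mid by simp
  next
    assume h: "v = u + e \<and> f = -e"
    have "p - v = of_real ((1 - t)/4 + 3*t/4 - 1) * e"
      using pu h by (simp add: algebra_simps)
    then have "taxi_norm (p - v) = \<bar>(1 - t)/4 + 3*t/4 - 1\<bar>"
      using taxi_norm_axis_unit[OF ue(2)] by metis
    then have "t = 1" using pv t(2) by (simp add: abs_le_iff field_simps)
    then show ?thesis using that[OF f(1)] h t(3) mid by (simp add: field_simps)
  qed
qed

lemma cut_segments_meet_vertex_midpoint: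
  assumes g: "gauss_int (L (Suc j))" "\<not> gauss_int (L (Suc k))"
    and p: "p \<in> closed_segment (step_mid j) (step_mid (Suc j))"
      "p \<in> closed_segment (step_mid k) (step_mid (Suc k))"
  shows "p \<in> {step_mid j, step_mid (Suc j)} \<and> p \<in> {step_mid k, step_mid (Suc k)}"
proof -
  obtain e1 e2 where e: "axis_unit e1" "axis_unit e2" "L j = L (Suc j) + e1/2"
    "L (Suc (Suc j)) = L (Suc j) + e2/2" "e1 \<noteq> e2"
    using turn_at_vertex[OF g(1)] by blast
  have mid: "step_mid j = L (Suc j) + e1/4" "step_mid (Suc j) = L (Suc j) + e2/4"
    unfolding step_mid_def e(3,4) by (simp_all add: field_simps)
  have "taxi_norm (p - L (Suc j)) \<le> 1/4"
    using cut_segment_taxi_ball[of j] p(1) by (auto simp: taxi_ball_def)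
  then obtain f where f: "axis_unit f" "p = L (Suc j) + f/4" "p \<in> {step_mid k, step_mid (Suc k)}"
    using straight_cut_near_vertex[OF g(2) g(1) p(2)] by blast
  obtain t where t: "0 \<le> t" "t \<le> 1"
    "p = of_real (1 - t) * (L (Suc j) + e1/4) + of_real t * (L (Suc j) + e2/4)"
    using closed_segmentE[OF p(1)] unfolding mid by blast
  have "of_real (1 - t) * e1 + of_real t * e2 = f"
    using chord_param_turn[OF t(3)] f(2) by simp
  then have "f = e1 \<or> f = e2" using chord_axis_unit_endpoint[OF e(1,2) f(1) e(5) t(1,2)] by simp
  then show ?thesis using f mid by auto
qed

lemma cut_segments_meet_at_ends:
  assumes jk: "j < r" "k < r" "j \<noteq> k"
    and p: "p \<in> closed_segment (step_mid j) (step_mid (Suc j))"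
      "p \<in> closed_segment (step_mid k) (step_mid (Suc k))"
  shows "p \<in> {step_mid j, step_mid (Suc j)} \<and> p \<in> {step_mid k, step_mid (Suc k)}"
proof (cases "gauss_int (L (Suc j))"; cases "gauss_int (L (Suc k))")
  assume "gauss_int (L (Suc j))" "gauss_int (L (Suc k))"
  then show ?thesis using cut_segments_disjoint_at_vertices[OF jk] p by blast
next
  assume "gauss_int (L (Suc j))" "\<not> gauss_int (L (Suc k))"
  then show ?thesis using cut_segments_meet_vertex_midpoint p by blast
next
  assume "\<not> gauss_int (L (Suc j))" "gauss_int (L (Suc k))"
  then show ?thesis using cut_segments_meet_vertex_midpoint[of k j p] p by blast
next
  assume "\<not> gauss_int (L (Suc j))" "\<not> gauss_int (L (Suc k))"
  then show ?thesis using cut_segments_disjoint_at_midpoints[OF jk] p by blast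
qed

lemma step_taxi_ball:
  "\<exists>c. gauss_int c \<and> L k \<in> taxi_ball c (3/4) \<and> step_mid k \<in> taxi_ball c (3/4)
      \<and> L (Suc k) \<in> taxi_ball c (3/4)"
proof -
  obtain v e where v: "gauss_int v" "axis_unit e" "step_mid k = v + e/4"
    "step_edge L k = {v, v + e/2}"
    using step_mid_form by blast
  have "L k \<in> taxi_ball v (3/4)" "L (Suc k) \<in> taxi_ball v (3/4)"
    using v(4) taxi_norm_axis_unit_fractions(3)[OF v(2)]
    by (auto simp: step_edge_def doubleton_eq_iff taxi_ball_def)
  moreover have "step_mid k \<in> taxi_ball v (3/4)"
    using v(3) taxi_norm_axis_unit_fractions(1)[OF v(2)] by (simp add: taxi_ball_def)
  ultimately show ?thesis using v(1) by blast
qed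

lemma corner_taxi_ball:
  "\<exists>c. gauss_int c \<and> step_mid k \<in> taxi_ball c (3/4) \<and> L (Suc k) \<in> taxi_ball c (3/4)
      \<and> step_mid (Suc k) \<in> taxi_ball c (3/4)"
proof (cases "gauss_int (L (Suc k))")
  case True
  then obtain e1 e2 where e: "axis_unit e1" "axis_unit e2" "L k = L (Suc k) + e1/2"
    "L (Suc (Suc k)) = L (Suc k) + e2/2"
    using turn_at_vertex by blast
  have d1: "step_mid k - L (Suc k) = e1/4" unfolding step_mid_def e(3) by (simp add: field_simps)
  have d2: "step_mid (Suc k) - L (Suc k) = e2/4" unfolding step_mid_def e(4)
    by (simp add: field_simps)
  have "step_mid k \<in> taxi_ball (L (Suc k)) (3/4)"
    by (rule taxi_ballI[OF d1]) (simp add: taxi_norm_axis_unit_fractions(1)[OF e(1)])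
  moreover have "L (Suc k) \<in> taxi_ball (L (Suc k)) (3/4)"
    by (rule taxi_ballI[of _ _ 0]) simp_all
  moreover have "step_mid (Suc k) \<in> taxi_ball (L (Suc k)) (3/4)"
    by (rule taxi_ballI[OF d2]) (simp add: taxi_norm_axis_unit_fractions(1)[OF e(2)])
  ultimately show ?thesis using True by blast
next
  case False
  then obtain u e where e: "gauss_int u" "axis_unit e" "L k = u" "L (Suc k) = u + e/2"
    "L (Suc (Suc k)) = u + e"
    using straight_at_midpoint by blast
  have d1: "step_mid k - u = e/4" unfolding step_mid_def e(3,4) by (simp add: field_simps)
  have d2: "step_mid (Suc k) - u = 3*e/4" unfolding step_mid_def e(4,5) by (simp add: field_simps)
  have d3: "L (Suc k) - u = e/2" using e(4) by simp
  have "step_mid k \<in> taxi_ball u (3/4)"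
    by (rule taxi_ballI[OF d1]) (simp add: taxi_norm_axis_unit_fractions(1)[OF e(2)])
  moreover have "L (Suc k) \<in> taxi_ball u (3/4)"
    by (rule taxi_ballI[OF d3]) (simp add: taxi_norm_axis_unit_fractions(3)[OF e(2)])
  moreover have "step_mid (Suc k) \<in> taxi_ball u (3/4)"
    by (rule taxi_ballI[OF d2]) (simp add: taxi_norm_axis_unit_fractions(4)[OF e(2)])
  ultimately show ?thesis using e(1) by blast
qed

end

text \<open>The affine chart sending the vertices of \<open>(1 + i)\<delta>\<int>\<^sup>2\<close> to the Gaussian integers; when \<open>a\<close> is a
  face center, it is sent to the center \<open>(1 + i)/2\<close> of the unit square.\<close>

definition chart :: "real \<Rightarrow> complex \<Rightarrow> complex \<Rightarrow> complex" where
  "chart \<delta> a z = (z - a) / (of_real \<delta> * (1 + \<i>)) + (1 + \<i>)/2"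

definition chart_ball :: "real \<Rightarrow> complex \<Rightarrow> complex \<Rightarrow> real \<Rightarrow> complex set" where
  "chart_ball \<delta> a c \<rho> = {z. chart \<delta> a z \<in> taxi_ball c \<rho>}"

lemma lattice_scale_nonzero: "\<delta> \<noteq> 0 \<Longrightarrow> of_real \<delta> * (1 + \<i>) \<noteq> 0"
  by (simp add: complex_eq_iff)

lemma chart_inj: "\<delta> \<noteq> 0 \<Longrightarrow> chart \<delta> a x = chart \<delta> a y \<Longrightarrow> x = y"
  using lattice_scale_nonzero[of \<delta>] by (simp add: chart_def divide_cancel_right)

lemma chart_affine:
  assumes "\<alpha> + \<beta> = 1"
  shows "chart \<delta> a (\<alpha> * x + \<beta> * y) = \<alpha> * chart \<delta> a x + \<beta> * chart \<delta> a y"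
proof -
  have \<beta>: "\<beta> = 1 - \<alpha>" using assms by (simp add: algebra_simps)
  show ?thesis
    unfolding \<beta> chart_def divide_inverse by (simp add: algebra_simps) (simp add: field_simps)
qed

lemma chart_midpoint: "chart \<delta> a ((x + y)/2) = (chart \<delta> a x + chart \<delta> a y)/2"
  using chart_affine[of "1/2" "1/2" \<delta> a x y] by (simp add: field_simps)

lemma chart_face: "chart \<delta> a a = (1 + \<i>)/2"
  by (simp add: chart_def)

lemma chart_shift: "\<delta> \<noteq> 0 \<Longrightarrow> chart \<delta> a (x + of_real \<delta> * (1 + \<i>) * w) = chart \<delta> a x + w"
  using lattice_scale_nonzero[of \<delta>] by (simp add: chart_def field_simps)

lemma chart_sum_eq_iff:
  "\<delta> \<noteq> 0 \<Longrightarrow> chart \<delta> a x + chart \<delta> a y = 2 * chart \<delta> a z \<longleftrightarrow> x + y = 2 * z"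
proof -
  assume d: "\<delta> \<noteq> 0"
  have "chart \<delta> a x + chart \<delta> a y - 2 * chart \<delta> a z = (x + y - 2 * z) / (of_real \<delta> * (1 + \<i>))"
    unfolding chart_def divide_inverse by (simp add: algebra_simps)
  then show ?thesis using lattice_scale_nonzero[OF d] by (metis divide_eq_0_iff eq_iff_diff_eq_0)
qed

lemma chart_closed_segment:
  "p \<in> closed_segment x y \<Longrightarrow> chart \<delta> a p \<in> closed_segment (chart \<delta> a x) (chart \<delta> a y)"
proof -
  assume "p \<in> closed_segment x y"
  then obtain t where t: "0 \<le> t" "t \<le> 1" "p = of_real (1 - t) * x + of_real t * y"
    by (rule closed_segmentE)
  have "chart \<delta> a p = of_real (1 - t) * chart \<delta> a x + of_real t * chart \<delta> a y"
    unfolding t(3) by (rule chart_affine) (simp add: of_real_diff)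
  then show ?thesis using t(1,2) unfolding closed_segment_def by (auto simp: scaleR_conv_of_real)
qed

lemma convex_chart_ball: "convex (chart_ball \<delta> a c \<rho>)"
  unfolding convex_alt
proof (intro ballI allI impI)
  fix x y :: complex and u :: real
  assume x: "x \<in> chart_ball \<delta> a c \<rho>" and y: "y \<in> chart_ball \<delta> a c \<rho>" and u: "0 \<le> u \<and> u \<le> 1"
  have "chart \<delta> a ((1 - u) *\<^sub>R x + u *\<^sub>R y) = (1 - u) *\<^sub>R chart \<delta> a x + u *\<^sub>R chart \<delta> a y"
    by (simp add: scaleR_conv_of_real chart_affine of_real_diff)
  also have "\<dots> \<in> taxi_ball c \<rho>"
    using convex_taxi_ball[of c \<rho>] x y u unfolding convex_alt chart_ball_def by auto
  finally show "(1 - u) *\<^sub>R x + u *\<^sub>R y \<in> chart_ball \<delta> a c \<rho>" by (simp add: chart_ball_def)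
qed

lemma face_notin_chart_ball: "gauss_int c \<Longrightarrow> \<rho> < 1 \<Longrightarrow> a \<notin> chart_ball \<delta> a c \<rho>"
  using taxi_norm_face_center[of c] by (auto simp: chart_ball_def taxi_ball_def chart_face)

lemma gauss_int_chart:
  assumes d: "\<delta> \<noteq> 0" and z: "lat_vertex \<delta> z" and a: "face_center \<delta> a"
  shows "gauss_int (chart \<delta> a z)"
proof -
  obtain m k :: int where mk: "z = of_real \<delta> * (1 + \<i>) * (of_int m + \<i> * of_int k)"
    using z by (auto simp: lat_vertex_def)
  obtain m' k' :: int
    where mk': "a - \<i> * of_real \<delta> = of_real \<delta> * (1 + \<i>) * (of_int m' + \<i> * of_int k')"
    using a by (auto simp: face_center_def lat_vertex_def)
  have "chart \<delta> a (a - \<i> * of_real \<delta>) = 0"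
    using lattice_scale_nonzero[OF d] by (simp add: chart_def field_simps)
  moreover have "z = (a - \<i> * of_real \<delta>)
      + of_real \<delta> * (1 + \<i>) * (of_int (m - m') + \<i> * of_int (k - k'))"
    unfolding mk mk' by (simp add: algebra_simps)
  ultimately have "chart \<delta> a z = of_int (m - m') + \<i> * of_int (k - k')"
    using chart_shift[OF d, of a "a - \<i> * of_real \<delta>"] by simp
  then show ?thesis
    unfolding gauss_int_def
    by (intro exI[of _ "m - m'"] exI[of _ "k - k'"]) (simp add: complex_eq_iff)
qed

lemma lattice_half_edge_of_unit_edge:
  assumes "gauss_int (chart \<delta> a A)" "axis_unit (chart \<delta> a B - chart \<delta> a A)" "{u, v} = {A, B}"
  shows "lattice_half_edge (chart \<delta> a ` {(u + v)/2, u})"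
proof -
  let ?e = "chart \<delta> a B - chart \<delta> a A"
  from assms(3) have "(u = A \<and> v = B) \<or> (u = B \<and> v = A)" by (auto simp: doubleton_eq_iff)
  then show ?thesis
  proof
    assume h: "u = A \<and> v = B"
    have "chart \<delta> a ` {(u + v)/2, u} = {chart \<delta> a A + ?e/2, chart \<delta> a A}"
      using h by (simp add: chart_midpoint field_simps)
    then show ?thesis unfolding lattice_half_edge_def using assms(1,2) by blast
  next
    assume h: "u = B \<and> v = A"
    have g: "gauss_int (chart \<delta> a B)"
      using gauss_int_add[OF assms(1) gauss_int_axis_unit[OF assms(2)]] by simp
    have "chart \<delta> a ` {(u + v)/2, u} = {chart \<delta> a B + (- ?e)/2, chart \<delta> a B}"
      using h by (simp add: chart_midpoint field_simps)
    then show ?thesis unfolding lattice_half_edge_def using g axis_unit_uminus[OF assms(2)] by blast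
  qed
qed

lemma lattice_half_edge_chart_face:
  assumes d: "\<delta> \<noteq> 0" and a: "face_center \<delta> a" and c: "face_center \<delta> c"
    and uv: "{u, v} \<in> face_edges \<delta> c"
  shows "lattice_half_edge (chart \<delta> a ` {(u + v)/2, u})"
proof -
  have lc: "lat_vertex \<delta> (c - \<i> * of_real \<delta>)" using c by (simp add: face_center_def)
  define p where "p = chart \<delta> a (c - \<i> * of_real \<delta>)"
  have gp: "gauss_int p" unfolding p_def by (rule gauss_int_chart[OF d lc a])
  have e1: "c + of_real \<delta> = (c - \<i> * of_real \<delta>) + of_real \<delta> * (1 + \<i>) * 1"
    by (simp add: algebra_simps)
  have e2: "c + \<i> * of_real \<delta> = (c - \<i> * of_real \<delta>) + of_real \<delta> * (1 + \<i>) * (1 + \<i>)"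
    by (simp add: algebra_simps)
  have e3: "c - of_real \<delta> = (c - \<i> * of_real \<delta>) + of_real \<delta> * (1 + \<i>) * \<i>"
    by (simp add: algebra_simps)
  have z1: "chart \<delta> a (c + of_real \<delta>) = p + 1" unfolding p_def
    by (subst e1, rule chart_shift[OF d])
  have z2: "chart \<delta> a (c + \<i> * of_real \<delta>) = p + (1 + \<i>)" unfolding p_def
    by (subst e2, rule chart_shift[OF d])
  have z3: "chart \<delta> a (c - of_real \<delta>) = p + \<i>" unfolding p_def
    by (subst e3, rule chart_shift[OF d])
  have g1: "gauss_int (p + 1)" "gauss_int (p + (1 + \<i>))" "gauss_int (p + \<i>)"
    using gauss_int_add[OF gp gauss_int_1] gauss_int_add[OF gp gauss_int_i]
      gauss_int_add[OF gp gauss_int_add[OF gauss_int_1 gauss_int_i]] by auto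
  have U: "axis_unit 1" "axis_unit (-1)" "axis_unit \<i>" "axis_unit (-\<i>)"
    by (simp_all add: axis_unit_def)
  from uv consider "{u, v} = {c - \<i> * of_real \<delta>, c + of_real \<delta>}"
    | "{u, v} = {c + of_real \<delta>, c + \<i> * of_real \<delta>}"
    | "{u, v} = {c + \<i> * of_real \<delta>, c - of_real \<delta>}"
    | "{u, v} = {c - of_real \<delta>, c - \<i> * of_real \<delta>}"
    unfolding face_edges_def by blast
  then show ?thesis
  proof cases
    case 1 show ?thesis
      by (rule lattice_half_edge_of_unit_edge[OF _ _ 1]) (simp_all add: p_def[symmetric] z1 gp U)
  next
    case 2 show ?thesis
      by (rule lattice_half_edge_of_unit_edge[OF _ _ 2]) (simp_all add: z1 z2 g1 U)
  next
    case 3 show ?thesis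
      by (rule lattice_half_edge_of_unit_edge[OF _ _ 3]) (simp_all add: z2 z3 g1 U)
  next
    case 4 show ?thesis
      by (rule lattice_half_edge_of_unit_edge[OF _ _ 4]) (simp_all add: z3 p_def[symmetric] g1 U)
  qed
qed


lemma closed_segment_avoids_face:
  assumes "lattice_half_edge (chart \<delta> a ` {x, y})"
  shows "a \<notin> closed_segment x y"
proof -
  obtain v e where ve: "gauss_int v" "axis_unit e" "chart \<delta> a ` {x, y} = {v + e/2, v}"
    using assms by (auto simp: lattice_half_edge_def)
  have "chart \<delta> a z \<in> taxi_ball v (1/2)" if "z \<in> {x, y}" for z
  proof -
    have "chart \<delta> a z \<in> {v + e/2, v}" using that ve(3) by blast
    then show ?thesis using taxi_norm_axis_unit_fractions(3)[OF ve(2)] by (auto simp: taxi_ball_def)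
  qed
  then have "closed_segment x y \<subseteq> chart_ball \<delta> a v (1/2)"
    by (intro closed_segment_subset convex_chart_ball) (auto simp: chart_ball_def)
  then show ?thesis using face_notin_chart_ball[OF ve(1), where \<rho> = "1/2" and \<delta> = \<delta> and a = a]
    by auto
qed

lemma finite_face_edges: "finite (face_edges \<delta> c)" by (simp add: face_edges_def)

lemma finite_face_edge: "M \<in> face_edges \<delta> c \<Longrightarrow> finite M"
  unfolding face_edges_def by (elim insertE) auto

lemma finite_dom_edges: "finite F \<Longrightarrow> finite (dom_edges \<delta> F)"
  unfolding dom_edges_def using finite_face_edges by simp

lemma finite_dom_vertices: "finite F \<Longrightarrow> finite (dom_vertices \<delta> F)"
  unfolding dom_vertices_def
proof (rule finite_Union)
  assume "finite F" then show "finite (dom_edges \<delta> F)" by (rule finite_dom_edges)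
  fix M assume "M \<in> dom_edges \<delta> F"
  then obtain c where "M \<in> face_edges \<delta> c" by (auto simp: dom_edges_def)
  then show "finite M" by (rule finite_face_edge)
qed

lemma finite_half_edges: "finite F \<Longrightarrow> finite (half_edges \<delta> F)"
proof -
  assume F: "finite F"
  have "half_edges \<delta> F \<subseteq> (\<lambda>(u, v). {(u + v)/2, u}) ` (dom_vertices \<delta> F \<times> dom_vertices \<delta> F)"
  proof
    fix h assume "h \<in> half_edges \<delta> F"
    then obtain u v where uv: "h = {(u + v)/2, u}" "{u, v} \<in> dom_edges \<delta> F"
      unfolding half_edges_def by blast
    have "u \<in> dom_vertices \<delta> F" "v \<in> dom_vertices \<delta> F"
      using uv(2) unfolding dom_vertices_def by blast+
    then show "h \<in> (\<lambda>(u, v). {(u + v)/2, u}) ` (dom_vertices \<delta> F \<times> dom_vertices \<delta> F)"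
      using uv(1) by (intro image_eqI[of _ _ "(u, v)"]) auto
  qed
  moreover have "finite ((\<lambda>(u, v). {(u + v)/2, u}) ` (dom_vertices \<delta> F \<times> dom_vertices \<delta> F))"
    using finite_dom_vertices[OF F] by simp
  ultimately show ?thesis by (rule finite_subset)
qed

locale lattice_domain =
  fixes \<delta> :: real and F :: "complex set" and a :: complex
  assumes delta_pos: "\<delta> > 0" and finite_faces: "finite F" and faces: "\<forall>c\<in>F. face_center \<delta> c"
    and face_a: "a \<in> F"
begin

lemma delta_nonzero: "\<delta> \<noteq> 0" using delta_pos by simp

lemma half_edge_chart:
  assumes "h \<in> half_edges \<delta> F"
  shows "lattice_half_edge (chart \<delta> a ` h)"
proof -
  obtain u v where uv: "h = {(u + v)/2, u}" "{u, v} \<in> dom_edges \<delta> F"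
    using assms by (auto simp: half_edges_def)
  then obtain c where c: "c \<in> F" "{u, v} \<in> face_edges \<delta> c" by (auto simp: dom_edges_def)
  have "lattice_half_edge (chart \<delta> a ` {(u + v)/2, u})"
    using lattice_half_edge_chart_face[OF delta_nonzero _ _ c(2)] faces face_a c(1) by blast
  then show ?thesis using uv(1) by simp
qed

lemma half_edgeE:
  assumes "h \<in> half_edges \<delta> F"
  obtains x y v e where "h = {x, y}" "chart \<delta> a x = v + e/2" "chart \<delta> a y = v" "gauss_int v"
    "axis_unit e"
proof -
  obtain v e where ve: "gauss_int v" "axis_unit e" "chart \<delta> a ` h = {v + e/2, v}"
    using half_edge_chart[OF assms] by (auto simp: lattice_half_edge_def)
  have i1: "v + e/2 \<in> chart \<delta> a ` h" and i2: "v \<in> chart \<delta> a ` h" using ve(3) by auto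
  obtain x where x: "x \<in> h" "chart \<delta> a x = v + e/2" using i1 by (metis imageE)
  obtain y where y: "y \<in> h" "chart \<delta> a y = v" using i2 by (metis imageE)
  note xy = x y
  have "h = {x, y}"
  proof
    show "{x, y} \<subseteq> h" using xy by auto
    show "h \<subseteq> {x, y}"
    proof
      fix z assume "z \<in> h"
      then have "chart \<delta> a z \<in> {v + e/2, v}" using ve(3) by blast
      then show "z \<in> {x, y}"
        using xy chart_inj[OF delta_nonzero, of a z x] chart_inj[OF delta_nonzero, of a z y] by auto
    qed
  qed
  then show ?thesis using that xy ve by blast
qed

lemma half_edge_avoids_face: "{x, y} \<in> half_edges \<delta> F \<Longrightarrow> a \<notin> closed_segment x y"
  by (rule closed_segment_avoids_face[OF half_edge_chart])

lemma half_edge_not_singleton: "h \<in> half_edges \<delta> F \<Longrightarrow> h \<noteq> {x}"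
proof
  assume h: "h \<in> half_edges \<delta> F" "h = {x}"
  obtain x' y' v e where E: "h = {x', y'}" "chart \<delta> a x' = v + e/2" "chart \<delta> a y' = v" "gauss_int v"
    "axis_unit e"
    using half_edgeE[OF h(1)] by blast
  have "x' = y'" using E(1) h(2) by auto
  then show False using E(2,3) axis_unit_nonzero[OF E(5)] by simp
qed

lemma inj_chart: "inj (chart \<delta> a)"
  by (rule injI) (rule chart_inj[OF delta_nonzero])

lemma deg_le_4:
  assumes A: "A \<subseteq> half_edges \<delta> F" and g: "gauss_int (chart \<delta> a v)"
  shows "deg A v \<le> 4"
proof -
  let ?S = "{h \<in> A. v \<in> h}"
  have inj: "inj_on ((`) (chart \<delta> a)) ?S"
    using inj_chart by (simp add: inj_on_def inj_image_eq_iff)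
  have sub: "(`) (chart \<delta> a) ` ?S \<subseteq> (\<lambda>e. {chart \<delta> a v + e/2, chart \<delta> a v}) ` {1, -1, \<i>, -\<i>}"
  proof
    fix H assume "H \<in> (`) (chart \<delta> a) ` ?S"
    then obtain h where h: "h \<in> A" "v \<in> h" "H = chart \<delta> a ` h" by blast
    obtain x y w e where E: "h = {x, y}" "chart \<delta> a x = w + e/2" "chart \<delta> a y = w" "gauss_int w"
      "axis_unit e"
      using half_edgeE[of h] A h(1) by blast
    have "chart \<delta> a v \<noteq> w + e/2" using g half_point_not_gauss_int[OF E(4,5)] by auto
    then have "v \<noteq> x" using E(2) by auto
    then have "v = y" using h(2) E(1) by auto
    then have "H = {chart \<delta> a v + e/2, chart \<delta> a v}" using h(3) E by auto
    then show "H \<in> (\<lambda>e. {chart \<delta> a v + e/2, chart \<delta> a v}) ` {1, -1, \<i>, -\<i>}" using E(5)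
      by (auto simp: axis_unit_def)
  qed
  have "card ?S = card ((`) (chart \<delta> a) ` ?S)" using card_image[OF inj] by simp
  also have "\<dots> \<le> card ((\<lambda>e. {chart \<delta> a v + e/2, chart \<delta> a v}) ` {1, -1, \<i>, -\<i>})"
    by (rule card_mono[OF _ sub]) simp
  also have "\<dots> \<le> card {1, -1, \<i>, -\<i> :: complex}" by (rule card_image_le) simp
  also have "\<dots> = 4" by (simp add: complex_eq_iff)
  finally show ?thesis by (simp add: deg_def)
qed

end

lemma length_steps: "length (steps w) = length w - 1"
  by (simp add: steps_def)

lemma nth_steps: "k < length w - 1 \<Longrightarrow> steps w ! k = {w ! k, w ! Suc k}"
  by (simp add: steps_def)

lemma trail_step_mem: "trail_in A w \<Longrightarrow> k < length w - 1 \<Longrightarrow> {w ! k, w ! Suc k} \<in> A"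
  using nth_mem[of k "steps w"] by (auto simp: trail_in_def length_steps nth_steps)

lemma trail_step_inj:
  assumes "trail_in A w" "j < length w - 1" "k < length w - 1"
    and "{w ! j, w ! Suc j} = {w ! k, w ! Suc k}"
  shows "j = k"
  using assms nth_eq_iff_index_eq[of "steps w" j k]
  by (auto simp: trail_in_def length_steps nth_steps)

text \<open>A closed list \<open>[l\<^sub>0, \<dots>, l\<^sub>r]\<close> with \<open>l\<^sub>r = l\<^sub>0\<close> read as an \<open>r\<close>-periodic sequence.\<close>

definition cyclic_nth :: "'a list \<Rightarrow> nat \<Rightarrow> 'a" where
  "cyclic_nth l k = l ! (k mod (length l - 1))"

lemma cyclic_nth_less: "k < length l - 1 \<Longrightarrow> cyclic_nth l k = l ! k"
  by (simp add: cyclic_nth_def)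

lemma nth_last_eq_nth_0: "l \<noteq> [] \<Longrightarrow> hd l = last l \<Longrightarrow> l ! (length l - 1) = l ! 0"
  by (simp add: hd_conv_nth last_conv_nth)

lemma cyclic_nth_Suc:
  assumes "2 \<le> length l" "hd l = last l"
  shows "cyclic_nth l (Suc k) = l ! Suc (k mod (length l - 1))"
proof -
  have last: "l ! (length l - 1) = l ! 0"
    using assms by (intro nth_last_eq_nth_0) auto
  show ?thesis
  proof (cases "Suc (k mod (length l - 1)) = length l - 1")
    case True then show ?thesis using last by (simp add: cyclic_nth_def mod_Suc)
  next
    case False then show ?thesis by (simp add: cyclic_nth_def mod_Suc)
  qed
qed

lemma cyclic_nth_Suc_less:
  "2 \<le> length l \<Longrightarrow> hd l = last l \<Longrightarrow> k < length l - 1 \<Longrightarrow> cyclic_nth l (Suc k) = l ! Suc k"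
  by (simp add: cyclic_nth_Suc)

lemma cyclic_nth_step:
  assumes "trail_in A l" "hd l = last l"
  shows "{cyclic_nth l k, cyclic_nth l (Suc k)} \<in> A"
proof -
  have "2 \<le> length l" using assms(1) by (simp add: trail_in_def)
  then show ?thesis
    using trail_step_mem[OF assms(1), of "k mod (length l - 1)"] cyclic_nth_Suc[OF _ assms(2)]
    by (simp add: cyclic_nth_def)
qed

lemma mod_cyclic_pred:
  fixes j r :: nat
  assumes "j < r"
  shows "(j + r - 1) mod r = (if j = 0 then r - 1 else j - 1)"
proof (cases "j = 0")
  case False
  then obtain i where "j = Suc i" using not0_implies_Suc by blast
  then show ?thesis using assms by simp
qed (use assms in simp)

context lattice_domain
begin

lemma noncrossing_loop_length:
  assumes A: "A \<subseteq> half_edges \<delta> F" and nl: "noncrossing_loop A l"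
  shows "3 \<le> length l - 1"
proof (rule ccontr)
  have tr: "trail_in A l" and closed: "hd l = last l" using nl by (auto simp: noncrossing_loop_def)
  then have len: "2 \<le> length l" by (simp add: trail_in_def)
  then have ne: "l \<noteq> []" by auto
  assume "\<not> 3 \<le> length l - 1"
  then consider "length l = 2" | "length l = 3" using len by linarith
  then show False
  proof cases
    case 1
    then have "l ! Suc 0 = l ! 0" using nth_last_eq_nth_0[OF ne closed] by simp
    then have "{l ! 0, l ! Suc 0} = {l ! 0}" by simp
    moreover have "{l ! 0, l ! Suc 0} \<in> half_edges \<delta> F" using trail_step_mem[OF tr] A 1 by auto
    ultimately show False using half_edge_not_singleton by metis
  next
    case 2
    then have "l ! 2 = l ! 0" using nth_last_eq_nth_0[OF ne closed] by simp
    then have "{l ! 1, l ! Suc 1} = {l ! 0, l ! Suc 0}" by (simp add: numeral_2_eq_2 insert_commute)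
    then show False using trail_step_inj[OF tr, of 1 0] 2 by simp
  qed
qed

lemma card_loop_steps_le_deg:
  assumes A: "A \<subseteq> half_edges \<delta> F" and tr: "trail_in A l" and closed: "hd l = last l"
  defines "L \<equiv> \<lambda>k. chart \<delta> a (cyclic_nth l k)"
  shows "card {step_edge L i | i. i < length l - 1 \<and> chart \<delta> a v \<in> step_edge L i} \<le> deg A v"
proof -
  have finite: "finite A" using A finite_half_edges[OF finite_faces] finite_subset by blast
  have "{step_edge L i | i. i < length l - 1 \<and> chart \<delta> a v \<in> step_edge L i}
      \<subseteq> (`) (chart \<delta> a) ` {h \<in> A. v \<in> h}"
  proof
    fix H assume "H \<in> {step_edge L i | i. i < length l - 1 \<and> chart \<delta> a v \<in> step_edge L i}"
    then obtain i where i: "chart \<delta> a v \<in> step_edge L i" "H = step_edge L i" by blast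
    have step: "step_edge L i = chart \<delta> a ` {cyclic_nth l i, cyclic_nth l (Suc i)}"
      by (simp add: step_edge_def L_def)
    then have "v \<in> {cyclic_nth l i, cyclic_nth l (Suc i)}"
      using i(1) inj_chart by (auto simp: inj_eq)
    then show "H \<in> (`) (chart \<delta> a) ` {h \<in> A. v \<in> h}"
      using i(2) step cyclic_nth_step[OF tr closed] by blast
  qed
  then have "card {step_edge L i | i. i < length l - 1 \<and> chart \<delta> a v \<in> step_edge L i}
      \<le> card ((`) (chart \<delta> a) ` {h \<in> A. v \<in> h})"
    by (rule card_mono[rotated]) (use finite in simp)
  also have "\<dots> \<le> deg A v"
    unfolding deg_def by (rule card_image_le) (use finite in simp)
  finally show ?thesis .
qed

text \<open>Read through the chart, a noncrossing loop becomes a \<open>lattice_loop\<close>: if four of its steps meet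
  at a vertex, that vertex has degree \<open>4\<close> in \<open>A\<close>, where the loop is forbidden to go straight.\<close>

lemma lattice_loop_noncrossing_loop:
  assumes A: "A \<subseteq> half_edges \<delta> F" and nl: "noncrossing_loop A l"
  shows "lattice_loop (\<lambda>k. chart \<delta> a (cyclic_nth l k)) (length l - 1)"
proof -
  have tr: "trail_in A l" and closed: "hd l = last l" using nl by (auto simp: noncrossing_loop_def)
  have len: "2 \<le> length l" using tr by (simp add: trail_in_def)
  define r where "r = length l - 1"
  define L where "L = (\<lambda>k. chart \<delta> a (cyclic_nth l k))"
  have L_step: "step_edge L k = chart \<delta> a ` {cyclic_nth l k, cyclic_nth l (Suc k)}" for k
    by (simp add: step_edge_def L_def)
  have step_A: "{cyclic_nth l k, cyclic_nth l (Suc k)} \<in> A" for k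
    by (rule cyclic_nth_step[OF tr closed])
  have less: "cyclic_nth l k = l ! k" "cyclic_nth l (Suc k) = l ! Suc k" if "k < r" for k
    using that len closed by (simp_all add: r_def cyclic_nth_less cyclic_nth_Suc_less)
  show ?thesis
    unfolding L_def[symmetric] r_def[symmetric]
  proof
    show "3 \<le> r" unfolding r_def by (rule noncrossing_loop_length[OF A nl])
    show "L (k mod r) = L k" for k by (simp add: L_def r_def cyclic_nth_def)
    show "lattice_half_edge (step_edge L k)" for k
      unfolding L_step using half_edge_chart step_A A by blast
    show "j = k" if "j < r" "k < r" "step_edge L j = step_edge L k" for j k
    proof -
      have "chart \<delta> a ` {cyclic_nth l j, cyclic_nth l (Suc j)}
          = chart \<delta> a ` {cyclic_nth l k, cyclic_nth l (Suc k)}"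
        using that(3) unfolding L_step .
      then have "{cyclic_nth l j, cyclic_nth l (Suc j)} = {cyclic_nth l k, cyclic_nth l (Suc k)}"
        by (simp only: inj_image_eq_iff[OF inj_chart])
      then have eq: "{l ! j, l ! Suc j} = {l ! k, l ! Suc k}" using that less by simp
      show ?thesis by (rule trail_step_inj[OF tr _ _ eq]) (use that in \<open>simp_all add: r_def\<close>)
    qed
    show "L (j + r - 1) + L (Suc j) \<noteq> 2 * L j"
      if j: "j < r" "gauss_int (L j)"
        and four: "4 \<le> card {step_edge L i | i. i < r \<and> L j \<in> step_edge L i}" for j
    proof -
      have "4 \<le> deg A (l ! j)"
        using four card_loop_steps_le_deg[OF A tr closed, of "l ! j"] less(1)[OF j(1)]
        by (simp add: L_def r_def)
      moreover have "deg A (l ! j) \<le> 4"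
        by (rule deg_le_4[OF A]) (use j less in \<open>simp add: L_def\<close>)
      ultimately have "deg A (l ! j) = 4" by linarith
      moreover have "\<forall>k < length l - 1. deg A (l ! k) = 4 \<longrightarrow>
          l ! (if k = 0 then length l - 1 - 1 else k - 1) + l ! Suc k \<noteq> 2 * l ! k"
        using nl unfolding noncrossing_loop_def Let_def by blast
      ultimately have straight: "l ! (if j = 0 then r - 1 else j - 1) + l ! Suc j \<noteq> 2 * l ! j"
        using j(1) unfolding r_def by auto
      have "L (j + r - 1) = chart \<delta> a (l ! (if j = 0 then r - 1 else j - 1))"
        unfolding L_def cyclic_nth_def r_def[symmetric] mod_cyclic_pred[OF j(1)] by (rule refl)
      then show ?thesis
        using straight less[OF j(1)] chart_sum_eq_iff[OF delta_nonzero] by (simp add: L_def)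
    qed
  qed
qed

end

section \<open>Winding numbers of noncrossing loops\<close>

text \<open>Cutting every corner of the loop \<open>P\<close> at the midpoints of its steps.\<close>

locale domain_loop = lattice_domain \<delta> F a + lattice_loop "\<lambda>k. chart \<delta> a (P k)" r
  for \<delta> F a and P :: "nat \<Rightarrow> complex" and r :: nat
begin

definition cut :: "nat \<Rightarrow> complex" where
  "cut k = (P k + P (Suc k)) / 2"

lemma chart_cut: "chart \<delta> a (cut k) = step_mid k"
  by (simp add: cut_def step_mid_def chart_midpoint)

lemma P_periodic: "P (k mod r) = P k"
  using periodic[of k] chart_inj[OF delta_nonzero] by blast

lemma cut_closed: "cut r = cut 0"
proof -
  have "P r = P 0" "P (Suc r) = P (Suc 0)"
    using P_periodic[of r] P_periodic[of "Suc r"] P_periodic[of 0] P_periodic[of "Suc 0"]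
      length_ge_3 by (simp_all add: mod_Suc)
  then show ?thesis by (simp add: cut_def)
qed

lemma step_avoids_face: "a \<notin> closed_segment (P k) (P (Suc k))"
  using half_edge_steps[of k] by (intro closed_segment_avoids_face) (simp add: step_edge_def)

text \<open>Each step and each cut corner lies in a taxicab ball of radius \<open>3/4\<close> about a lattice vertex;
  these balls are convex and miss the face \<open>a\<close>, which makes both splittings below additive.\<close>

lemma seg_winding_step_split:
  "seg_winding a (P k) (cut k) + seg_winding a (cut k) (P (Suc k))
      = seg_winding a (P k) (P (Suc k))"
proof -
  obtain c where c: "gauss_int c" "chart \<delta> a (P k) \<in> taxi_ball c (3/4)"
    "step_mid k \<in> taxi_ball c (3/4)" "chart \<delta> a (P (Suc k)) \<in> taxi_ball c (3/4)"
    using step_taxi_ball[of k] by blast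
  show ?thesis
  proof (rule seg_winding_triangle[OF convex_chart_ball])
    show "P k \<in> chart_ball \<delta> a c (3/4)" "cut k \<in> chart_ball \<delta> a c (3/4)"
      "P (Suc k) \<in> chart_ball \<delta> a c (3/4)"
      using c chart_cut[of k] by (simp_all add: chart_ball_def)
    show "a \<notin> chart_ball \<delta> a c (3/4)" by (rule face_notin_chart_ball[OF c(1)]) simp
  qed
qed

lemma seg_winding_corner_split:
  "seg_winding a (cut k) (P (Suc k)) + seg_winding a (P (Suc k)) (cut (Suc k))
     = seg_winding a (cut k) (cut (Suc k))"
  and cut_segment_avoids_face: "a \<notin> closed_segment (cut k) (cut (Suc k))"
proof -
  obtain c where c: "gauss_int c" "step_mid k \<in> taxi_ball c (3/4)"
    "chart \<delta> a (P (Suc k)) \<in> taxi_ball c (3/4)" "step_mid (Suc k) \<in> taxi_ball c (3/4)"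
    using corner_taxi_ball[of k] by blast
  have mem: "cut k \<in> chart_ball \<delta> a c (3/4)" "P (Suc k) \<in> chart_ball \<delta> a c (3/4)"
    "cut (Suc k) \<in> chart_ball \<delta> a c (3/4)"
    using c chart_cut[of k] chart_cut[of "Suc k"] by (simp_all add: chart_ball_def)
  have avoid: "a \<notin> chart_ball \<delta> a c (3/4)" by (rule face_notin_chart_ball[OF c(1)]) simp
  show "seg_winding a (cut k) (P (Suc k)) + seg_winding a (P (Suc k)) (cut (Suc k))
      = seg_winding a (cut k) (cut (Suc k))"
    by (rule seg_winding_triangle[OF convex_chart_ball mem avoid])
  have "closed_segment (cut k) (cut (Suc k)) \<subseteq> chart_ball \<delta> a c (3/4)"
    by (rule closed_segment_subset[OF mem(1) mem(3) convex_chart_ball])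
  then show "a \<notin> closed_segment (cut k) (cut (Suc k))" using avoid by auto
qed

lemma face_notin_cut_polygon: "a \<notin> path_image (polygon_path cut r)"
  using cut_segment_avoids_face length_ge_3 by (auto simp: path_image_polygon_path)

lemma winding_number_cut_polygon:
  "winding_number (polygon_path cut r) a = (\<Sum>k<r. seg_winding a (P k) (P (Suc k)))"
proof -
  have shift: "(\<Sum>k<r. seg_winding a (P (Suc k)) (cut (Suc k)))
      = (\<Sum>k<r. seg_winding a (P k) (cut k))"
  proof -
    have "(\<Sum>k<Suc r. seg_winding a (P k) (cut k))
        = seg_winding a (P 0) (cut 0) + (\<Sum>k<r. seg_winding a (P (Suc k)) (cut (Suc k)))"
      by (rule sum.lessThan_Suc_shift)
    moreover have "P r = P 0" using P_periodic[of r] P_periodic[of 0] by simp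
    ultimately show ?thesis using cut_closed by simp
  qed
  have "(\<Sum>k<r. seg_winding a (P k) (P (Suc k)))
      = (\<Sum>k<r. seg_winding a (P k) (cut k)) + (\<Sum>k<r. seg_winding a (cut k) (P (Suc k)))"
    by (simp add: seg_winding_step_split[symmetric] sum.distrib)
  also have "\<dots> = (\<Sum>k<r. seg_winding a (cut k) (P (Suc k)))
      + (\<Sum>k<r. seg_winding a (P (Suc k)) (cut (Suc k)))"
    using shift by simp
  also have "\<dots> = (\<Sum>k<r. seg_winding a (cut k) (cut (Suc k)))"
    by (simp add: seg_winding_corner_split[symmetric] sum.distrib)
  also have "\<dots> = winding_number (polygon_path cut r) a"
    using winding_number_polygon_path[OF _ face_notin_cut_polygon] length_ge_3 by simp
  finally show ?thesis ..
qed

lemma simple_path_cut_polygon: "simple_path (polygon_path cut r)"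
proof (rule simple_path_polygon_path)
  show "2 \<le> r" using length_ge_3 by simp
  show "cut r = cut 0" by (rule cut_closed)
  show "i = j" if "i < r" "j < r" "cut i = cut j" for i j
    using step_mid_inj[OF that(1,2)] chart_cut[of i] chart_cut[of j] that(3) by simp
  show "closed_segment (cut i) (cut (Suc i)) \<inter> closed_segment (cut j) (cut (Suc j))
      \<subseteq> {cut i, cut (Suc i)} \<inter> {cut j, cut (Suc j)}"
    if "i < r" "j < r" "i \<noteq> j" for i j
  proof
    fix p assume p: "p \<in> closed_segment (cut i) (cut (Suc i))
        \<inter> closed_segment (cut j) (cut (Suc j))"
    then have "chart \<delta> a p \<in> closed_segment (step_mid i) (step_mid (Suc i))"
      "chart \<delta> a p \<in> closed_segment (step_mid j) (step_mid (Suc j))"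
      using chart_closed_segment[of p] by (auto simp flip: chart_cut)
    then have "chart \<delta> a p \<in> {step_mid i, step_mid (Suc i)} \<inter> {step_mid j, step_mid (Suc j)}"
      using cut_segments_meet_at_ends[OF that] by blast
    then show "p \<in> {cut i, cut (Suc i)} \<inter> {cut j, cut (Suc j)}"
      using inj_chart by (auto simp flip: chart_cut simp: inj_eq)
  qed
qed

end

context lattice_domain
begin

theorem winding_number_noncrossing_loop:
  assumes A: "A \<subseteq> half_edges \<delta> F" and nl: "noncrossing_loop A l"
  shows "winding_number (polypath l) a \<in> {-1, 0, 1}"
proof -
  have tr: "trail_in A l" and closed: "hd l = last l" using nl by (auto simp: noncrossing_loop_def)
  have len: "2 \<le> length l" using tr by (simp add: trail_in_def)
  define r where "r = length l - 1"
  interpret domain_loop \<delta> F a "cyclic_nth l" r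
    unfolding r_def
    by (intro domain_loop.intro lattice_domain_axioms lattice_loop_noncrossing_loop[OF A nl])
  have less: "cyclic_nth l k = l ! k" "cyclic_nth l (Suc k) = l ! Suc k" if "k < r" for k
    using that len closed by (simp_all add: r_def cyclic_nth_less cyclic_nth_Suc_less)
  have "l \<noteq> []" using len by auto
  moreover have "a \<notin> path_image (polypath l)"
  proof -
    have "last l = cyclic_nth l 0"
      using \<open>l \<noteq> []\<close> by (simp add: cyclic_nth_def hd_conv_nth flip: closed)
    then have "a \<noteq> last l" using step_avoids_face[of 0] by auto
    moreover have "a \<notin> closed_segment (l ! k) (l ! Suc k)" if "k < r" for k
      using step_avoids_face[of k] less[OF that] by simp
    ultimately show ?thesis by (auto simp: path_image_polypath[OF \<open>l \<noteq> []\<close>] r_def)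
  qed
  ultimately have "winding_number (polypath l) a
      = (\<Sum>k<r. seg_winding a (cyclic_nth l k) (cyclic_nth l (Suc k)))"
    by (simp add: winding_number_polypath less r_def)
  also have "\<dots> = winding_number (polygon_path cut r) a"
    by (rule winding_number_cut_polygon[symmetric])
  also have "\<dots> \<in> {-1, 0, 1}"
    using simple_closed_path_winding_number_cases[OF simple_path_cut_polygon _
        face_notin_cut_polygon]
      cut_closed by (simp add: polygon_path_start polygon_path_finish)
  finally show ?thesis .
qed

end

lemma prod_list_map_nth: "prod_list (map f xs) = (\<Prod>i<length xs. f (xs ! i))"
  by (induction xs) (simp_all add: prod.lessThan_Suc_shift del: prod.lessThan_Suc)

context lattice_domain
begin

lemma edge_sign_square: "h \<in> half_edges \<delta> F \<Longrightarrow> (edge_sign a h)^2 = 1"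
  using half_edgeE half_edge_avoids_face edge_sign_doubleton seg_sign_square by metis

lemma prod_edge_sign_square:
  assumes "B \<subseteq> half_edges \<delta> F"
  shows "(prod (edge_sign a) B)^2 = 1"
proof -
  have "(prod (edge_sign a) B)^2 = (\<Prod>h\<in>B. 1)"
    unfolding prod_power_distrib using assms edge_sign_square by (intro prod.cong) auto
  then show ?thesis by simp
qed

lemma trail_avoids_face:
  assumes A: "A \<subseteq> half_edges \<delta> F" and tr: "trail_in A w"
  shows "a \<notin> set w" and "a \<notin> path_image (polypath w)"
proof -
  have len: "2 \<le> length w" using tr by (simp add: trail_in_def)
  have seg: "a \<notin> closed_segment (w ! k) (w ! Suc k)" if "k < length w - 1" for k
    using trail_step_mem[OF tr that] A half_edge_avoids_face by blast
  show "a \<notin> set w"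
  proof
    assume "a \<in> set w"
    then obtain k where k: "k < length w" "w ! k = a" by (auto simp: in_set_conv_nth)
    show False
    proof (cases "k < length w - 1")
      case True then show False using seg[OF True] k(2) ends_in_segment(1) by metis
    next
      case False
      then have "k - 1 < length w - 1" "Suc (k - 1) = k" using k(1) len by auto
      then show False using seg[of "k - 1"] k(2) ends_in_segment(2) by metis
    qed
  qed
  moreover have "w \<noteq> []" using len by auto
  ultimately show "a \<notin> path_image (polypath w)"
    using seg by (auto simp: path_image_polypath)
qed

lemma exp_winding_trail:
  assumes A: "A \<subseteq> half_edges \<delta> F" and tr: "trail_in A w"
  shows "exp (pi * \<i> * winding_number (polypath w) a) * root_at a (hd w)
       = prod (edge_sign a) (set (steps w)) * root_at a (last w)"
proof -
  have w: "w \<noteq> []" and ds: "distinct (steps w)" using tr by (auto simp: trail_in_def)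
  have seg: "a \<notin> closed_segment (w ! k) (w ! Suc k)" if "k < length w - 1" for k
    using trail_step_mem[OF tr that] A half_edge_avoids_face by blast
  have "exp (pi * \<i> * winding_number (polypath w) a)
      = (\<Prod>k<length w - 1. exp (pi * \<i> * seg_winding a (w ! k) (w ! Suc k)))"
    unfolding winding_number_polypath[OF w trail_avoids_face(2)[OF A tr]] sum_distrib_left
    by (rule exp_sum) simp
  moreover have "(\<Prod>k<length w - 1. seg_sign a (w ! k) (w ! Suc k))
      = prod (edge_sign a) (set (steps w))"
  proof -
    have "(\<Prod>k<length w - 1. seg_sign a (w ! k) (w ! Suc k))
        = (\<Prod>k<length w - 1. edge_sign a (steps w ! k))"
      by (rule prod.cong) (simp_all add: nth_steps edge_sign_doubleton seg)
    also have "\<dots> = prod_list (map (edge_sign a) (steps w))"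
      by (simp add: prod_list_map_nth length_steps)
    also have "\<dots> = prod (edge_sign a) (set (steps w))"
      by (simp add: prod.distinct_set_conv_list[OF ds])
    finally show ?thesis .
  qed
  ultimately show ?thesis
    using exp_winding_telescope[OF w] seg by simp
qed

lemma sheet_eq_sign_product:
  assumes A: "A \<subseteq> half_edges \<delta> F" and tr: "trail_in A w"
    and hat_hd: "(hat (hd w))^2 = hd w - a" and hat_last: "(hat (last w))^2 = last w - a"
  shows "complex_of_int (sheet a hat w) = hat (hd w) / root_at a (hd w)
    * (hat (last w) / root_at a (last w)) * prod (edge_sign a) (set (steps w))"
proof -
  have w: "w \<noteq> []" using tr by (auto simp: trail_in_def)
  have hd_a: "hd w \<noteq> a" and last_a: "last w \<noteq> a" using trail_avoids_face(1)[OF A tr] w by auto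
  define \<epsilon>\<^sub>0 \<epsilon>\<^sub>1 X where "\<epsilon>\<^sub>0 = hat (hd w) / root_at a (hd w)"
    and "\<epsilon>\<^sub>1 = hat (last w) / root_at a (last w)" and "X = prod (edge_sign a) (set (steps w))"
  have root_nz: "root_at a (hd w) \<noteq> 0" "root_at a (last w) \<noteq> 0"
    using root_at_nonzero hd_a last_a by auto
  have \<epsilon>\<^sub>1_sq: "\<epsilon>\<^sub>1^2 = 1" using hat_hd last_a hat_last
    by (simp add: \<epsilon>\<^sub>1_def power_divide root_at_square)
  have sq: "(\<epsilon>\<^sub>0 * \<epsilon>\<^sub>1 * X)^2 = 1"
    using hat_hd hd_a \<epsilon>\<^sub>1_sq prod_edge_sign_square[of "set (steps w)"] tr A
    by (auto simp: \<epsilon>\<^sub>0_def X_def power_mult_distrib power_divide root_at_square trail_in_def)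
  have "hat (hd w) * exp (pi * \<i> * winding_number (polypath w) a) = \<epsilon>\<^sub>0 * X * root_at a (last w)"
    using exp_winding_trail[OF A tr] root_nz by (simp add: \<epsilon>\<^sub>0_def X_def field_simps)
  moreover have "hat (last w) = \<epsilon>\<^sub>1 * root_at a (last w)" using root_nz by (simp add: \<epsilon>\<^sub>1_def)
  ultimately have "hat (hd w) * exp (pi * \<i> * winding_number (polypath w) a) = hat (last w)
      \<longleftrightarrow> \<epsilon>\<^sub>0 * \<epsilon>\<^sub>1 * X = 1"
    using root_nz \<epsilon>\<^sub>1_sq
    by (auto simp: power2_eq_square) (metis mult.assoc mult.commute mult_1_right)+
  then show ?thesis
    using sheet_winding_char[where hat = hat, OF w trail_avoids_face(2)[OF A tr] hat_hd] sq
    by (auto simp: \<epsilon>\<^sub>0_def \<epsilon>\<^sub>1_def X_def power2_eq_1_iff)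
qed

lemma loop_sign_eq:
  assumes A: "A \<subseteq> half_edges \<delta> F" and nl: "noncrossing_loop A l"
  shows "(if winding_number (polypath l) a \<noteq> 0 then -1 else 1) = prod (edge_sign a) (set (steps l))"
proof -
  have tr: "trail_in A l" and closed: "hd l = last l" using nl by (auto simp: noncrossing_loop_def)
  define W where "W = winding_number (polypath l) a"
  have "l \<noteq> []" using tr by (auto simp: trail_in_def)
  then have "hd l \<noteq> a" using trail_avoids_face(1)[OF A tr] by auto
  then have "exp (pi * \<i> * W) = prod (edge_sign a) (set (steps l))"
    using exp_winding_trail[OF A tr] closed root_at_nonzero[of "hd l" a] by (simp add: W_def)
  moreover have "W \<in> {-1, 0, 1}" unfolding W_def by (rule winding_number_noncrossing_loop[OF A nl])
  then have "exp (pi * \<i> * W) = (if W \<noteq> 0 then -1 else 1)"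
    by (auto simp: exp_minus field_simps)
  ultimately show ?thesis by (simp add: W_def)
qed

end

section \<open>Independence of the choice of walks\<close>

lemma neg1_power_length_filter:
  "complex_of_int ((-1) ^ length (filter P xs)) = prod_list (map (\<lambda>x. if P x then -1 else 1) xs)"
  by (induction xs) auto

lemma set_conv_nth_image: "set xs = (\<lambda>i. xs ! i) ` {..<length xs}"
  by (metis atLeast0LessThan set_map set_upt map_nth)

lemma remainder_eq:
  "length ws = n \<Longrightarrow> remainder \<gamma> ws = \<gamma> - (\<Union>i<n. set (steps (ws ! i)))"
  by (simp add: remainder_def set_conv_nth_image[of ws] image_image)

definition walk_end :: "'a list list \<Rightarrow> nat \<times> bool \<Rightarrow> 'a" where
  "walk_end ws x = (if snd x then last (ws ! fst x) else hd (ws ! fst x))"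

text \<open>Each \<open>b\<^sub>j\<close> is an endpoint of exactly one walk, and the two endpoints of a walk differ.\<close>

lemma inj_on_walk_end:
  assumes adm: "admissible \<delta> F b n \<gamma> ws"
  shows "inj_on (walk_end ws) ({..<n} \<times> {False, True})"
proof (rule inj_onI)
  have ends: "\<forall>i<n. hd (ws ! i) \<in> b ` {..<2*n} \<and> last (ws ! i) \<in> b ` {..<2*n}
      \<and> hd (ws ! i) \<noteq> last (ws ! i)"
    and unique: "\<forall>j<2*n. \<exists>!i. i < n \<and> (b j = hd (ws ! i) \<or> b j = last (ws ! i))"
    using adm by (auto simp: admissible_def)
  fix x y assume x: "x \<in> {..<n} \<times> {False, True}" and y: "y \<in> {..<n} \<times> {False, True}"
    and eq: "walk_end ws x = walk_end ws y"
  obtain j where j: "j < 2*n" "b j = walk_end ws x"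
    using x ends by (auto simp: walk_end_def)
  have "fst x < n" "fst y < n" using x y by auto
  moreover have "b j = hd (ws ! fst x) \<or> b j = last (ws ! fst x)"
    using j by (auto simp: walk_end_def split: if_splits)
  moreover have "b j = hd (ws ! fst y) \<or> b j = last (ws ! fst y)"
    using j eq by (auto simp: walk_end_def split: if_splits)
  ultimately have same_walk: "fst x = fst y" using unique j(1) by blast
  show "x = y"
  proof (rule ccontr)
    assume "x \<noteq> y"
    then have "snd x \<noteq> snd y" using same_walk by (simp add: prod_eq_iff)
    then have "hd (ws ! fst x) = last (ws ! fst x)"
      using eq same_walk by (auto simp: walk_end_def split: if_splits)
    then show False using ends \<open>fst x < n\<close> by blast
  qed
qed

lemma walk_end_image:
  assumes adm: "admissible \<delta> F b n \<gamma> ws" and inj: "inj_on b {..<2*n}"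
  shows "walk_end ws ` ({..<n} \<times> {False, True}) = b ` {..<2*n}"
proof (rule card_subset_eq)
  show "finite (b ` {..<2*n})" by simp
  show "walk_end ws ` ({..<n} \<times> {False, True}) \<subseteq> b ` {..<2*n}"
    using adm by (auto simp: admissible_def walk_end_def)
  have "card (walk_end ws ` ({..<n} \<times> {False, True})) = card ({..<n} \<times> {False, True})"
    by (rule card_image[OF inj_on_walk_end[OF adm]])
  also have "\<dots> = card (b ` {..<2*n})" using card_image[OF inj] by (simp add: card_cartesian_product)
  finally show "card (walk_end ws ` ({..<n} \<times> {False, True})) = card (b ` {..<2*n})" .
qed

lemma prod_walk_endpoints:
  fixes f :: "complex \<Rightarrow> complex"
  assumes adm: "admissible \<delta> F b n \<gamma> ws" and inj: "inj_on b {..<2*n}"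
  shows "(\<Prod>i<n. f (hd (ws!i)) * f (last (ws!i))) = (\<Prod>j<2*n. f (b j))"
proof -
  have "(\<Prod>i<n. f (hd (ws!i)) * f (last (ws!i)))
      = (\<Prod>i<n. \<Prod>s\<in>{False, True}. f (walk_end ws (i, s)))"
    by (simp add: walk_end_def mult.commute)
  also have "\<dots> = (\<Prod>x\<in>{..<n} \<times> {False, True}. f (walk_end ws x))"
    by (subst prod.cartesian_product) (simp add: case_prod_beta)
  also have "\<dots> = prod f (walk_end ws ` ({..<n} \<times> {False, True}))"
    using prod.reindex[OF inj_on_walk_end[OF adm], of f] by simp
  also have "\<dots> = (\<Prod>j<2*n. f (b j))"
    using walk_end_image[OF adm inj] prod.reindex[OF inj] by simp
  finally show ?thesis .
qed

context lattice_domain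
begin

lemma sheet_product_eq:
  assumes cfg: "config \<delta> F b n \<gamma>" and adm: "admissible \<delta> F b n \<gamma> ws"
    and inj: "inj_on b {..<2*n}" and hat_b: "\<forall>j<2*n. (hat (b j))^2 = b j - a"
  shows "complex_of_int (\<Prod>i<n. sheet a hat (ws ! i))
    = (\<Prod>j<2*n. hat (b j) / root_at a (b j)) * prod (edge_sign a) (\<Union>i<n. set (steps (ws ! i)))"
proof -
  define \<epsilon> where "\<epsilon> z = hat z / root_at a z" for z
  have \<gamma>: "\<gamma> \<subseteq> half_edges \<delta> F" using cfg by (simp add: config_def)
  have tr: "trail_in \<gamma> (ws ! i)" and ends: "hd (ws ! i) \<in> b ` {..<2*n}"
    "last (ws ! i) \<in> b ` {..<2*n}"
    if "i < n" for i
    using adm that by (auto simp: admissible_def)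
  have disjoint: "set (steps (ws ! i)) \<inter> set (steps (ws ! i')) = {}"
    if "i < n" "i' < n" "i \<noteq> i'" for i i'
    using adm that by (auto simp: admissible_def)
  have sheet: "complex_of_int (sheet a hat (ws ! i))
      = \<epsilon> (hd (ws ! i)) * \<epsilon> (last (ws ! i)) * prod (edge_sign a) (set (steps (ws ! i)))"
    if "i < n" for i
    unfolding \<epsilon>_def
    by (rule sheet_eq_sign_product[OF \<gamma> tr[OF that]]) (use ends[OF that] hat_b in auto)
  have "complex_of_int (\<Prod>i<n. sheet a hat (ws ! i))
      = (\<Prod>i<n. \<epsilon> (hd (ws ! i)) * \<epsilon> (last (ws ! i)) * prod (edge_sign a) (set (steps (ws ! i))))"
    unfolding of_int_prod by (rule prod.cong) (simp_all add: sheet)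
  also have "\<dots> = (\<Prod>i<n. \<epsilon> (hd (ws ! i)) * \<epsilon> (last (ws ! i)))
      * (\<Prod>i<n. prod (edge_sign a) (set (steps (ws ! i))))"
    by (rule prod.distrib)
  also have "(\<Prod>i<n. \<epsilon> (hd (ws ! i)) * \<epsilon> (last (ws ! i))) = (\<Prod>j<2*n. \<epsilon> (b j))"
    by (rule prod_walk_endpoints[OF adm inj])
  also have "(\<Prod>i<n. prod (edge_sign a) (set (steps (ws ! i))))
      = prod (edge_sign a) (\<Union>i<n. set (steps (ws ! i)))"
    by (rule prod.UNION_disjoint[symmetric]) (use disjoint in auto)
  finally show ?thesis by (simp add: \<epsilon>_def)
qed

lemma loop_sign_product:
  assumes R: "R \<subseteq> half_edges \<delta> F" and L: "loop_decomp R Ls"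
  shows "complex_of_int ((-1::int) ^ loops_around a Ls) = prod (edge_sign a) R"
proof -
  have loops: "noncrossing_loop R l" if "l \<in> set Ls" for l
    using L that by (simp add: loop_decomp_def)
  have disjoint: "set (steps (Ls ! i)) \<inter> set (steps (Ls ! i')) = {}"
    if "i < length Ls" "i' < length Ls" "i \<noteq> i'" for i i'
    using L that by (simp add: loop_decomp_def)
  have "complex_of_int ((-1::int) ^ loops_around a Ls)
      = prod_list (map (\<lambda>l. if winding_number (polypath l) a \<noteq> 0 then -1 else 1) Ls)"
    unfolding loops_around_def by (rule neg1_power_length_filter)
  also have "\<dots> = prod_list (map (\<lambda>l. prod (edge_sign a) (set (steps l))) Ls)"
    by (rule arg_cong[where f = prod_list], rule map_cong) (simp_all add: loop_sign_eq[OF R loops])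
  also have "\<dots> = (\<Prod>i<length Ls. prod (edge_sign a) (set (steps (Ls ! i))))"
    by (rule prod_list_map_nth)
  also have "\<dots> = prod (edge_sign a) (\<Union>i<length Ls. set (steps (Ls ! i)))"
    by (rule prod.UNION_disjoint[symmetric]) (use disjoint in auto)
  also have "(\<Union>i<length Ls. set (steps (Ls ! i))) = R"
    using L by (simp add: loop_decomp_def set_conv_nth_image[of Ls] image_image)
  finally show ?thesis .
qed

theorem signed_sheet_product_eq:
  assumes cfg: "config \<delta> F b n \<gamma>" and adm: "admissible \<delta> F b n \<gamma> ws"
    and L: "loop_decomp (remainder \<gamma> ws) L"
    and inj: "inj_on b {..<2*n}" and hat_b: "\<forall>j<2*n. (hat (b j))^2 = b j - a"
  shows "complex_of_int ((-1::int) ^ loops_around a L * (\<Prod>i<n. sheet a hat (ws ! i)))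
       = (\<Prod>j<2*n. hat (b j) / root_at a (b j)) * prod (edge_sign a) \<gamma>"
proof -
  define U where "U = (\<Union>i<n. set (steps (ws ! i)))"
  have \<gamma>: "\<gamma> \<subseteq> half_edges \<delta> F" using cfg by (simp add: config_def)
  have fin: "finite \<gamma>" using \<gamma> finite_half_edges[OF finite_faces] finite_subset by blast
  have U: "U \<subseteq> \<gamma>" using adm by (auto simp: U_def admissible_def trail_in_def)
  have rem: "remainder \<gamma> ws = \<gamma> - U"
    using adm by (simp add: U_def remainder_eq admissible_def)
  have "complex_of_int ((-1::int) ^ loops_around a L * (\<Prod>i<n. sheet a hat (ws ! i)))
      = prod (edge_sign a) (\<gamma> - U) * ((\<Prod>j<2*n. hat (b j) / root_at a (b j)) * prod (edge_sign a) U)"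
  proof -
    have "remainder \<gamma> ws \<subseteq> half_edges \<delta> F" using \<gamma> rem by blast
    then have "complex_of_int ((-1::int) ^ loops_around a L) = prod (edge_sign a) (\<gamma> - U)"
      using loop_sign_product[OF _ L] rem by simp
    then show ?thesis using sheet_product_eq[OF cfg adm inj hat_b] by (simp add: U_def)
  qed
  also have "\<dots> = (\<Prod>j<2*n. hat (b j) / root_at a (b j))
      * (prod (edge_sign a) (\<gamma> - U) * prod (edge_sign a) U)"
    by (simp only: ac_simps)
  also have "prod (edge_sign a) (\<gamma> - U) * prod (edge_sign a) U = prod (edge_sign a) \<gamma>"
    by (rule prod.subset_diff[OF U fin, symmetric])
  finally show ?thesis .
qed

end

theorem proposition3p13:
  fixes \<delta> :: real and F :: "complex set" and a :: complex and b :: "nat \<Rightarrow> complex"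
    and n :: nat and hat :: "complex \<Rightarrow> complex" and \<gamma> :: "complex set set"
    and ws ws' L L' :: "complex list list"
  assumes "\<delta> > 0"
    and "finite F" and "\<forall>c\<in>F. face_center \<delta> c"
    and "a \<in> F"
    and "inj_on b {..<2*n}"
    and "\<forall>j<2*n. b j \<in> medial \<delta> F"
    and "\<forall>j<2*n. (hat (b j))^2 = b j - a"
    and "config \<delta> F b n \<gamma>"
    and "admissible \<delta> F b n \<gamma> ws"
    and "admissible \<delta> F b n \<gamma> ws'"
    and "loop_decomp (remainder \<gamma> ws) L"
    and "loop_decomp (remainder \<gamma> ws') L'"
  shows "(-1::int) ^ loops_around a L * (\<Prod>i<n. sheet a hat (ws ! i))
       = (-1::int) ^ loops_around a L' * (\<Prod>i<n. sheet a hat (ws' ! i))"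
proof -
  interpret lattice_domain \<delta> F a using assms(1-4) by unfold_locales
  have "complex_of_int ((-1::int) ^ loops_around a L * (\<Prod>i<n. sheet a hat (ws ! i)))
      = complex_of_int ((-1::int) ^ loops_around a L' * (\<Prod>i<n. sheet a hat (ws' ! i)))"
    using signed_sheet_product_eq[OF assms(8) assms(9) assms(11) assms(5) assms(7)]
      signed_sheet_product_eq[OF assms(8) assms(10) assms(12) assms(5) assms(7)] by simp
  then show ?thesis by (simp only: of_int_eq_iff)
qed

end
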